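(* Let $\Omega\subset\mathbb{R}^3$ be a bounded domain with $C^2$ boundary, unit outer normal $\nu$, and $d=\sup_{x,y\in\Omega}|x-y|$; let $\epsilon_0,\mu_0>0$, $\alpha\in L^\infty(\partial\Omega)$, and let $J_\epsilon,J_\mu\in[H^1(\Omega)]^3$ be real-valued with $\mathrm{supp}\,J_\epsilon,\mathrm{supp}\,J_\mu\subset\Omega$. For $\omega\in\mathbb{C}$, $x\in\partial\Omega$, $y\in\Omega$ set $$G(x,y,\omega)=(i\omega\mu_0J_\epsilon(y)+\mathrm{curl}\,J_\mu(y))\times\nu(x)-\alpha(x)\big\{F(y,\omega)-[F(y,\omega)\cdot\nu(x)]\nu(x)\big\},\quad F(y,\omega)=-i\omega\epsilon_0J_\mu(y)+\mathrm{curl}\,J_\epsilon(y),$$ and define the entire function $$I_0(k)=2\int_0^k\int_{\partial\Omega}\Big(\int_\Omega\frac{e^{i\kappa|x-y|}}{4\pi|x-y|}G(x,y,\omega)\,dy\Big)\cdot\Big(\int_\Omega\frac{e^{-i\kappa|x-y|}}{4\pi|x-y|}G(x,y,-\omega)\,dy\Big)d\Gamma(x)\,d\omega,\qquad \kappa=\omega\sqrt{\epsilon_0\mu_0},$$ where the $\omega$-integral is along any path from $0$ to $k\in\mathbb{C}$. Then for $k=k_1+ik_2$, $$|I_0(k)|\le C(1+|k|^3)\big(\|J_\epsilon\|^2_{H^1(\Omega)}+\|J_\mu\|^2_{H^1(\Omega)}\big)\exp\big(2d\sqrt{\epsilon_0\mu_0}\,|k_2|\big),$$ with $C$ independent of $k$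 and of $J_\epsilon,J_\mu$.
   Context: For real $k>0$, $I_0(k)=2\int_0^k\|E(\cdot,\omega)\times\nu-\alpha H_\tau(\cdot,\omega)\|^2_{L^2(\partial\Omega)}d\omega$ where $(E,H)$ is the radiating solution of the homogeneous-medium Maxwell system with sources $J_\mu,J_\epsilon$ and $H_\tau=H-(H\cdot\nu)\nu$. *)

theory Defs
  imports "HOL-Analysis.Analysis" "HOL-Complex_Analysis.Complex_Analysis"
begin

definition C2_boundary :: "(real^3) set \<Rightarrow> bool" where
  "C2_boundary \<Omega> \<longleftrightarrow>
     (\<forall>p\<in>frontier \<Omega>. \<exists>r>0. \<exists>(Q::real^3 \<Rightarrow> real^3) (h::real^2 \<Rightarrow> real)
        (g::real^2 \<Rightarrow> real^2) (H::real^2 \<Rightarrow> real^2^2).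
        orthogonal_transformation Q \<and>
        (\<forall>z. (h has_derivative (\<lambda>v. g z \<bullet> v)) (at z)) \<and>
        (\<forall>z. (g has_derivative (\<lambda>v. H z *v v)) (at z)) \<and>
        continuous_on UNIV H \<and>
        (\<forall>x\<in>ball p r. x \<in> \<Omega> \<longleftrightarrow>
            (Q (x - p)) $ 3 < h (vector [(Q (x - p)) $ 1, (Q (x - p)) $ 2])))"

definition outer_normal :: "(real^3) set \<Rightarrow> real^3 \<Rightarrow> real^3" where
  "outer_normal \<Omega> p = (THE n. norm n = 1 \<and>
     (\<forall>e>0. \<exists>\<delta>>0. \<forall>x\<in>ball p \<delta>.
        (x \<in> \<Omega> \<longrightarrow> n \<bullet> (x - p) \<le> e * norm (x - p)) \<and>
        (x \<notin> closure \<Omega> \<longrightarrow> n \<bullet> (x - p) \<ge> - e * norm (x - p))))"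

section \<open>Surface measure = 2-dimensional Hausdorff measure (normalised to area)\<close>

definition hausdorff2_delta :: "real \<Rightarrow> (real^3) set \<Rightarrow> ennreal" where
  "hausdorff2_delta \<delta> A = (INF C \<in> {C :: nat \<Rightarrow> (real^3) set.
        A \<subseteq> (\<Union>i. C i) \<and> (\<forall>i. bounded (C i) \<and> diameter (C i) \<le> \<delta>)}.
      (\<Sum>i. ennreal (pi / 4 * diameter (C i) ^ 2)))"

definition hausdorff2_outer :: "(real^3) set \<Rightarrow> ennreal" where
  "hausdorff2_outer A = (SUP \<delta> \<in> {0<..}. hausdorff2_delta \<delta> A)"

definition surface_measure :: "(real^3) measure" where
  "surface_measure = measure_of UNIV (sets borel) hausdorff2_outer"

coinductive smooth3 :: "(real^3 \<Rightarrow> real) \<Rightarrow> bool" where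
  "(\<forall>x. (f has_derivative (\<lambda>v. \<Sum>j\<in>UNIV. v $ j * g j x)) (at x)) \<Longrightarrow>
   (\<forall>j. smooth3 (g j)) \<Longrightarrow> smooth3 f"

definition test_fun :: "(real^3) set \<Rightarrow> (real^3 \<Rightarrow> real) \<Rightarrow> bool" where
  "test_fun \<Omega> \<phi> \<longleftrightarrow> smooth3 \<phi> \<and> (\<exists>K. compact K \<and> K \<subseteq> \<Omega> \<and> (\<forall>x. x \<notin> K \<longrightarrow> \<phi> x = 0))"

definition L2 :: "(real^3) set \<Rightarrow> (real^3 \<Rightarrow> real) \<Rightarrow> bool" where
  "L2 \<Omega> f \<longleftrightarrow> f \<in> borel_measurable (lebesgue_on \<Omega>) \<and>
                 set_integrable lebesgue \<Omega> (\<lambda>x. (f x)\<^sup>2)"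

definition is_weak_pderiv :: "(real^3) set \<Rightarrow> (real^3 \<Rightarrow> real) \<Rightarrow> 3 \<Rightarrow> (real^3 \<Rightarrow> real) \<Rightarrow> bool" where
  "is_weak_pderiv \<Omega> f j g \<longleftrightarrow>
     (\<forall>\<phi>. test_fun \<Omega> \<phi> \<longrightarrow>
        (LINT x:\<Omega>|lebesgue. f x * frechet_derivative \<phi> (at x) (axis j 1))
          = - (LINT x:\<Omega>|lebesgue. g x * \<phi> x))"

definition wpd :: "(real^3) set \<Rightarrow> (real^3 \<Rightarrow> real) \<Rightarrow> 3 \<Rightarrow> real^3 \<Rightarrow> real" where
  "wpd \<Omega> f j = (SOME g. L2 \<Omega> g \<and> is_weak_pderiv \<Omega> f j g)"

definition in_H1 :: "(real^3) set \<Rightarrow> (real^3 \<Rightarrow> real^3) \<Rightarrow> bool" where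
  "in_H1 \<Omega> J \<longleftrightarrow> (\<forall>i. L2 \<Omega> (\<lambda>x. J x $ i) \<and>
      (\<forall>j. \<exists>g. L2 \<Omega> g \<and> is_weak_pderiv \<Omega> (\<lambda>x. J x $ i) j g))"

definition H1_norm_sq :: "(real^3) set \<Rightarrow> (real^3 \<Rightarrow> real^3) \<Rightarrow> real" where
  "H1_norm_sq \<Omega> J = (\<Sum>i\<in>UNIV. (LINT x:\<Omega>|lebesgue. (J x $ i)\<^sup>2) +
       (\<Sum>j\<in>UNIV. LINT x:\<Omega>|lebesgue. (wpd \<Omega> (\<lambda>y. J y $ i) j x)\<^sup>2))"

definition wcurl :: "(real^3) set \<Rightarrow> (real^3 \<Rightarrow> real^3) \<Rightarrow> real^3 \<Rightarrow> real^3" where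
  "wcurl \<Omega> J x = vector
     [wpd \<Omega> (\<lambda>y. J y $ 3) 2 x - wpd \<Omega> (\<lambda>y. J y $ 2) 3 x,
      wpd \<Omega> (\<lambda>y. J y $ 1) 3 x - wpd \<Omega> (\<lambda>y. J y $ 3) 1 x,
      wpd \<Omega> (\<lambda>y. J y $ 2) 1 x - wpd \<Omega> (\<lambda>y. J y $ 1) 2 x]"

definition supp_in :: "(real^3) set \<Rightarrow> (real^3 \<Rightarrow> real^3) \<Rightarrow> bool" where
  "supp_in \<Omega> J \<longleftrightarrow> (\<exists>K. compact K \<and> K \<subseteq> \<Omega> \<and> (\<forall>x. x \<notin> K \<longrightarrow> J x = 0))"

definition Linfty_boundary :: "(real^3) set \<Rightarrow> (real^3 \<Rightarrow> complex) \<Rightarrow> bool" where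
  "Linfty_boundary \<Omega> \<alpha> \<longleftrightarrow> set_borel_measurable surface_measure (frontier \<Omega>) \<alpha> \<and>
     (\<exists>M. AE x in surface_measure. x \<in> frontier \<Omega> \<longrightarrow> cmod (\<alpha> x) \<le> M)"

definition cv :: "real^3 \<Rightarrow> complex^3" where
  "cv v = (\<chi> i. complex_of_real (v $ i))"

text \<open>Bilinear (non-Hermitian) dot product and cross product.\<close>
definition cdot :: "complex^3 \<Rightarrow> complex^3 \<Rightarrow> complex" where
  "cdot a b = (\<Sum>i\<in>UNIV. a $ i * b $ i)"

definition ccross :: "complex^3 \<Rightarrow> complex^3 \<Rightarrow> complex^3" where
  "ccross a b = vector [a$2 * b$3 - a$3 * b$2, a$3 * b$1 - a$1 * b$3, a$1 * b$2 - a$2 * b$1]"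

definition Ffun :: "(real^3) set \<Rightarrow> real \<Rightarrow> (real^3 \<Rightarrow> real^3) \<Rightarrow> (real^3 \<Rightarrow> real^3)
                    \<Rightarrow> real^3 \<Rightarrow> complex \<Rightarrow> complex^3" where
  "Ffun \<Omega> \<epsilon>0 Je Jm y \<omega> = (- \<i> * \<omega> * complex_of_real \<epsilon>0) *s cv (Jm y) + cv (wcurl \<Omega> Je y)"

definition Gfun :: "(real^3) set \<Rightarrow> real \<Rightarrow> real \<Rightarrow> (real^3 \<Rightarrow> complex)
                    \<Rightarrow> (real^3 \<Rightarrow> real^3) \<Rightarrow> (real^3 \<Rightarrow> real^3)
                    \<Rightarrow> real^3 \<Rightarrow> real^3 \<Rightarrow> complex \<Rightarrow> complex^3" where
  "Gfun \<Omega> \<epsilon>0 \<mu>0 \<alpha> Je Jm x y \<omega> =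
     (let \<nu> = cv (outer_normal \<Omega> x); F = Ffun \<Omega> \<epsilon>0 Je Jm y \<omega> in
      ccross ((\<i> * \<omega> * complex_of_real \<mu>0) *s cv (Je y) + cv (wcurl \<Omega> Jm y)) \<nu>
      - \<alpha> x *s (F - cdot F \<nu> *s \<nu>))"

definition I0 :: "(real^3) set \<Rightarrow> real \<Rightarrow> real \<Rightarrow> (real^3 \<Rightarrow> complex)
                  \<Rightarrow> (real^3 \<Rightarrow> real^3) \<Rightarrow> (real^3 \<Rightarrow> real^3) \<Rightarrow> complex \<Rightarrow> complex" where
  "I0 \<Omega> \<epsilon>0 \<mu>0 \<alpha> Je Jm k =
     2 * contour_integral (linepath 0 k) (\<lambda>\<omega>.
       let \<kappa> = \<omega> * complex_of_real (sqrt (\<epsilon>0 * \<mu>0)) in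
       LINT x:frontier \<Omega>|surface_measure.
         cdot (\<chi> i. LINT y:\<Omega>|lebesgue.
                 exp (\<i> * \<kappa> * dist x y) / (4 * pi * dist x y) * Gfun \<Omega> \<epsilon>0 \<mu>0 \<alpha> Je Jm x y \<omega> $ i)
              (\<chi> i. LINT y:\<Omega>|lebesgue.
                 exp (- \<i> * \<kappa> * dist x y) / (4 * pi * dist x y) * Gfun \<Omega> \<epsilon>0 \<mu>0 \<alpha> Je Jm x y (- \<omega>) $ i))"

end

theory Submission
  imports Defs
begin

(* For x on the boundary and frequency omega, the integrand of I0 is u(x,omega) . u(x,-omega)
   with u(x,omega) = int_Omega e^(i kappa |x-y|) / (4 pi |x-y|) G(x,y,omega) dy.  Pointwise,
   |G(x,y,omega)| <= c (1 + |omega|) (1 + |alpha x|) q(y), where q^2 is the H^1 density of Je and Jm,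
   and the kernel is at most e^(d sqrt(eps0 mu0) |Im omega|) / (4 pi |x-y|).  Cauchy-Schwarz and
   int_(|x-y| < R) |x-y|^-2 dy <= 8 |B_1| R (summing over dyadic shells) give
   |u(x,omega)|^2 <= c' (1 + |omega|)^2 e^(2 d sqrt(eps0 mu0) |Im omega|) (|Je|^2 + |Jm|^2).
   The boundary has finite surface measure: it is locally the graph of a C^1 function over a
   square, which a grid cuts into pieces of small diameter and bounded total area.  Integrating
   over the boundary and along [0, k] gives the factor |k| (1 + |k|)^2 <= 4 (1 + |k|^3).
   Integrals of non-integrable functions are 0, so none of the bounds needs integrability. *)

section \<open>Surface measure via finite covers\<close>

definition small_cover :: "real \<Rightarrow> (real^3) set \<Rightarrow> real \<Rightarrow> bool" where
  "small_cover \<delta> A B \<longleftrightarrow> (\<exists>cs. A \<subseteq> \<Union>(set cs) \<and> (\<forall>c\<in>set cs. bounded c \<and> diameter c \<le> \<delta>) \<and>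
      (\<Sum>c\<leftarrow>cs. pi / 4 * diameter c ^ 2) \<le> B)"

lemma small_cover_empty: "small_cover \<delta> {} 0"
  unfolding small_cover_def by (intro exI[of _ "[]"]) simp

lemma small_cover_Un:
  assumes "small_cover \<delta> A a" and "small_cover \<delta> B b"
  shows "small_cover \<delta> (A \<union> B) (a + b)"
proof -
  obtain cs ds where "A \<subseteq> \<Union>(set cs)" "\<forall>c\<in>set cs. bounded c \<and> diameter c \<le> \<delta>"
      "(\<Sum>c\<leftarrow>cs. pi / 4 * diameter c ^ 2) \<le> a"
    and "B \<subseteq> \<Union>(set ds)" "\<forall>c\<in>set ds. bounded c \<and> diameter c \<le> \<delta>"
      "(\<Sum>c\<leftarrow>ds. pi / 4 * diameter c ^ 2) \<le> b"
    using assms unfolding small_cover_def by blast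
  then show ?thesis
    unfolding small_cover_def by (intro exI[of _ "cs @ ds"]) auto
qed

lemma small_cover_UN:
  assumes "finite T" and "\<And>p. p \<in> T \<Longrightarrow> small_cover \<delta> (S p) (b p)"
  shows "small_cover \<delta> (\<Union>p\<in>T. S p) (\<Sum>p\<in>T. b p)"
  using assms by (induction T rule: finite_induct) (simp_all add: small_cover_empty small_cover_Un)

lemma hausdorff2_delta_le_small_cover:
  assumes "\<delta> > 0" and "small_cover \<delta> A B"
  shows "hausdorff2_delta \<delta> A \<le> ennreal B"
proof -
  obtain cs where cs: "A \<subseteq> \<Union>(set cs)" "\<forall>c\<in>set cs. bounded c \<and> diameter c \<le> \<delta>"
      "(\<Sum>c\<leftarrow>cs. pi / 4 * diameter c ^ 2) \<le> B"
    using assms(2) unfolding small_cover_def by blast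
  define C where "C i = (if i < length cs then cs ! i else {})" for i
  have "A \<subseteq> (\<Union>i. C i)"
    using cs(1) by (force simp: C_def in_set_conv_nth)
  moreover have "bounded (C i) \<and> diameter (C i) \<le> \<delta>" for i
    using cs(2) assms(1) by (simp add: C_def)
  ultimately have "hausdorff2_delta \<delta> A \<le> (\<Sum>i. ennreal (pi / 4 * diameter (C i) ^ 2))"
    unfolding hausdorff2_delta_def by (intro INF_lower) simp
  also have "\<dots> = (\<Sum>i<length cs. ennreal (pi / 4 * diameter (C i) ^ 2))"
    by (rule suminf_finite) (auto simp: C_def)
  also have "\<dots> = ennreal (\<Sum>c\<leftarrow>cs. pi / 4 * diameter c ^ 2)"
    by (simp add: sum_list_sum_nth atLeast0LessThan C_def flip: sum_ennreal)
  also have "\<dots> \<le> ennreal B"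
    using cs(3) by (rule ennreal_leI)
  finally show ?thesis .
qed

lemma emeasure_surface_measure_le_small_cover:
  assumes "\<And>\<delta>. \<delta> > 0 \<Longrightarrow> small_cover \<delta> A B"
  shows "emeasure surface_measure A \<le> ennreal B"
proof -
  have "emeasure surface_measure A \<le> hausdorff2_outer A"
    unfolding surface_measure_def emeasure_measure_of_conv by auto
  also have "\<dots> \<le> ennreal B"
    unfolding hausdorff2_outer_def
    using assms hausdorff2_delta_le_small_cover by (auto intro!: SUP_least)
  finally show ?thesis .
qed

lemma frontier_in_sets_surface_measure: "frontier \<Omega> \<in> sets surface_measure"
proof -
  have "sets surface_measure = sigma_sets UNIV (sets borel)"
    unfolding surface_measure_def by (rule sets_measure_of) simp
  then show ?thesis by (simp add: frontier_closed borel_closed sigma_sets.Basic)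
qed

section \<open>Boundary charts\<close>

lemma parallel_if_inner_nonneg_on_halfspace:
  fixes m v :: "'a::real_inner"
  assumes "m \<noteq> 0" and halfspace: "\<And>d. m \<bullet> d > 0 \<Longrightarrow> v \<bullet> d \<ge> 0"
  shows "\<exists>c\<ge>0. v = c *\<^sub>R m"
proof -
  have mm: "m \<bullet> m > 0" using assms(1) by simp
  define c where "c = (v \<bullet> m) / (m \<bullet> m)"
  define a where "a = v - c *\<^sub>R m"
  have am: "a \<bullet> m = 0" unfolding a_def c_def using mm by (simp add: inner_diff_left)
  have va: "v \<bullet> a = a \<bullet> a"
    using am by (simp add: a_def inner_diff_left inner_diff_right inner_commute)
  have tilt: "v \<bullet> m - t * (a \<bullet> a) \<ge> 0" for t
  proof -
    have "m \<bullet> (m - t *\<^sub>R a) > 0" using am mm by (simp add: inner_diff_right inner_commute)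
    then show ?thesis using halfspace[of "m - t *\<^sub>R a"] va by (simp add: inner_diff_right)
  qed
  have "a \<bullet> a = 0"
  proof (rule ccontr)
    assume "a \<bullet> a \<noteq> 0"
    then have "a \<bullet> a > 0" by (simp add: order_le_neq_trans)
    then show False using tilt[of "(\<bar>v \<bullet> m\<bar> + 1) / (a \<bullet> a)"] by simp
  qed
  then have "v = c *\<^sub>R m" by (simp add: a_def)
  moreover have "c \<ge> 0" using halfspace[OF mm] mm by (simp add: c_def)
  ultimately show ?thesis by blast
qed

lemma lipschitz_on_cball_if_continuous_gradient:
  fixes h :: "'a::euclidean_space \<Rightarrow> real"
  assumes "\<And>z. (h has_derivative (\<lambda>v. g z \<bullet> v)) (at z)" and "continuous_on UNIV g"
  shows "\<exists>L>0. \<forall>u\<in>cball 0 \<rho>. \<forall>v\<in>cball 0 \<rho>. \<bar>h u - h v\<bar> \<le> L * norm (u - v)"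
proof -
  have "compact (g ` cball 0 \<rho>)"
    by (intro compact_continuous_image continuous_on_subset[OF assms(2)]) auto
  then obtain L where L: "L > 0" "\<And>z. z \<in> cball 0 \<rho> \<Longrightarrow> norm (g z) \<le> L"
    using compact_imp_bounded bounded_pos by (metis imageI)
  have "norm (h u - h v) \<le> L * norm (u - v)" if "u \<in> cball 0 \<rho>" "v \<in> cball 0 \<rho>" for u v
  proof (rule differentiable_bound[of "cball 0 \<rho>" h "\<lambda>z v. g z \<bullet> v" L])
    show "(h has_derivative (\<lambda>v. g z \<bullet> v)) (at z within cball 0 \<rho>)" for z
      using assms(1) by (rule has_derivative_at_withinI)
    show "onorm (\<lambda>v. g z \<bullet> v) \<le> L" if "z \<in> cball 0 \<rho>" for z
      using onorm_inner_right[OF bounded_linear_ident, of "g z"] L(2)[OF that]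
      by (simp add: onorm_id)
  qed (use that in auto)
  then show ?thesis using L(1) by auto
qed

lemma grid_interval_exists:
  fixes r s t :: real
  assumes "0 < s" and "- r \<le> t" and "t < - r + real N * s"
  shows "\<exists>a<N. - r + real a * s \<le> t \<and> t \<le> - r + real (a + 1) * s"
proof -
  define a where "a = nat \<lfloor>(t + r) / s\<rfloor>"
  have "real a \<le> (t + r) / s" "(t + r) / s < real a + 1"
    using assms(1,2) by (auto simp: a_def)
  moreover have "(t + r) / s < real N" using assms by (simp add: field_simps)
  ultimately have "a < N" by linarith
  with \<open>real a \<le> (t + r) / s\<close> \<open>(t + r) / s < real a + 1\<close> show ?thesis using assms(1)
    by (intro exI[of _ a]) (auto simp: field_simps)
qed

lemma dist_le_on_lipschitz_graph:
  fixes u v :: "real^3"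
  assumes "\<bar>u $ 3 - v $ 3\<bar> \<le> L * ((\<bar>u $ 1 - v $ 1\<bar>) + (\<bar>u $ 2 - v $ 2\<bar>))" and "0 \<le> L"
    and "\<bar>u $ 1 - v $ 1\<bar> \<le> s" and "\<bar>u $ 2 - v $ 2\<bar> \<le> s"
  shows "dist u v \<le> (2 + 2 * L) * s"
proof -
  have "dist u v \<le> (\<bar>u $ 1 - v $ 1\<bar>) + (\<bar>u $ 2 - v $ 2\<bar>) + (\<bar>u $ 3 - v $ 3\<bar>)"
    using norm_le_l1_cart[of "u - v"] by (simp add: dist_norm sum_3)
  moreover have "L * ((\<bar>u $ 1 - v $ 1\<bar>) + (\<bar>u $ 2 - v $ 2\<bar>)) \<le> L * (s + s)"
    using assms(2-4) by (intro mult_left_mono) auto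
  ultimately show ?thesis using assms(1,3,4) by (simp add: algebra_simps)
qed

lemma sum_list_diameter_sq_le:
  assumes "\<And>C. C \<in> set cs \<Longrightarrow> bounded C \<and> diameter C \<le> d"
  shows "(\<Sum>C\<leftarrow>cs. pi / 4 * diameter C ^ 2) \<le> real (length cs) * (pi / 4 * d\<^sup>2)"
proof -
  have "(\<Sum>C\<leftarrow>cs. pi / 4 * diameter C ^ 2) \<le> (\<Sum>C\<leftarrow>cs. pi / 4 * d\<^sup>2)"
    using assms diameter_ge_0 by (intro sum_list_mono mult_left_mono power_mono) auto
  then show ?thesis by (simp add: sum_list_triv)
qed

lemma small_cover_lipschitz_graph:
  fixes S :: "(real^3) set" and w :: "real^3 \<Rightarrow> real^3"
  assumes isometric: "\<And>x y. x \<in> S \<Longrightarrow> y \<in> S \<Longrightarrow> dist x y = dist (w x) (w y)"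
    and square: "\<And>x. x \<in> S \<Longrightarrow> \<bar>w x $ 1\<bar> < r \<and> \<bar>w x $ 2\<bar> < r"
    and graph: "\<And>x y. x \<in> S \<Longrightarrow> y \<in> S \<Longrightarrow>
      \<bar>w x $ 3 - w y $ 3\<bar> \<le> L * ((\<bar>w x $ 1 - w y $ 1\<bar>) + (\<bar>w x $ 2 - w y $ 2\<bar>))"
    and "0 \<le> L" and "0 < r" and "0 < \<delta>"
  shows "small_cover \<delta> S (pi * (2 + 2 * L)\<^sup>2 * r\<^sup>2)"
proof -
  define c where "c = 2 + 2 * L"
  have c: "c > 0" using assms(4) by (simp add: c_def)
  define N :: nat where "N = nat \<lceil>2 * r * c / \<delta>\<rceil> + 1"
  have N: "N \<ge> 1" "2 * r * c / \<delta> < real N" unfolding N_def by linarith+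
  define s where "s = 2 * r / real N"
  have s: "s > 0" using assms(5) N by (simp add: s_def)
  have cs: "c * s \<le> \<delta>"
    using N assms(6) by (simp add: s_def divide_less_eq field_simps)
  define interval where "interval a = {- r + real a * s .. - r + real (a + 1) * s}" for a :: nat
  define cell where "cell a b = {x \<in> S. w x $ 1 \<in> interval a \<and> w x $ 2 \<in> interval b}" for a b
  define cells where "cells = concat (map (\<lambda>a. map (cell a) [0..<N]) [0..<N])"
  have close: "\<bar>u - v\<bar> \<le> s" if "u \<in> interval a" "v \<in> interval a" for u v a
    using that by (auto simp: interval_def algebra_simps)
  have dist_cell: "dist x y \<le> c * s" if "x \<in> cell a b" "y \<in> cell a b" for x y a b
  proof -
    have "x \<in> S" "y \<in> S" "\<bar>w x $ 1 - w y $ 1\<bar> \<le> s" "\<bar>w x $ 2 - w y $ 2\<bar> \<le> s"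
      using that close by (auto simp: cell_def)
    then show ?thesis
      using isometric dist_le_on_lipschitz_graph[OF graph assms(4)] by (simp add: c_def)
  qed
  have bounded_cell: "bounded (cell a b)" for a b
  proof (cases "cell a b = {}")
    case False
    then obtain x0 where "x0 \<in> cell a b" by blast
    then show ?thesis using dist_cell unfolding bounded_def by blast
  qed simp
  have diameter_cell: "diameter (cell a b) \<le> c * s" for a b
    using dist_cell c s by (intro diameter_le) (auto simp: dist_norm)
  have "S \<subseteq> \<Union>(set cells)"
  proof
    fix x assume x: "x \<in> S"
    have "real N * s = 2 * r" using N by (simp add: s_def)
    then have "\<exists>a<N. w x $ 1 \<in> interval a" "\<exists>b<N. w x $ 2 \<in> interval b"
      using grid_interval_exists[OF s, of r _ N] square[OF x] by (auto simp: interval_def abs_less_iff)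
    then obtain a b where "a < N" "w x $ 1 \<in> interval a" "b < N" "w x $ 2 \<in> interval b"
      by blast
    then show "x \<in> \<Union>(set cells)" using x by (auto simp: cells_def cell_def)
  qed
  moreover have "\<forall>C\<in>set cells. bounded C \<and> diameter C \<le> \<delta>"
    using bounded_cell order_trans[OF diameter_cell cs] by (auto simp: cells_def)
  moreover have "(\<Sum>C\<leftarrow>cells. pi / 4 * diameter C ^ 2) \<le> pi * c\<^sup>2 * r\<^sup>2"
  proof -
    have "(\<Sum>C\<leftarrow>cells. pi / 4 * diameter C ^ 2) \<le> real (length cells) * (pi / 4 * (c * s)\<^sup>2)"
      using bounded_cell diameter_cell by (intro sum_list_diameter_sq_le) (auto simp: cells_def)
    also have "\<dots> = pi * c\<^sup>2 * r\<^sup>2"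
      using N by (simp add: cells_def length_concat comp_def sum_list_triv s_def power2_eq_square field_simps)
    finally show ?thesis .
  qed
  ultimately show ?thesis unfolding small_cover_def c_def by blast
qed

definition outer_normal_at :: "(real^3) set \<Rightarrow> real^3 \<Rightarrow> real^3 \<Rightarrow> bool" where
  "outer_normal_at \<Omega> p n \<longleftrightarrow> norm n = 1 \<and>
     (\<forall>e>0. \<exists>\<delta>>0. \<forall>x\<in>ball p \<delta>.
        (x \<in> \<Omega> \<longrightarrow> n \<bullet> (x - p) \<le> e * norm (x - p)) \<and>
        (x \<notin> closure \<Omega> \<longrightarrow> n \<bullet> (x - p) \<ge> - e * norm (x - p)))"

lemma norm_outer_normal_if_unique:
  assumes "\<exists>!n. outer_normal_at \<Omega> p n"
  shows "norm (outer_normal \<Omega> p) = 1"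
proof -
  have "outer_normal_at \<Omega> p (THE n. outer_normal_at \<Omega> p n)"
    using assms by (rule theI')
  then show ?thesis unfolding outer_normal_def outer_normal_at_def by blast
qed

locale boundary_graph_chart =
  fixes \<Omega> :: "(real^3) set" and p :: "real^3" and r :: real and Q :: "real^3 \<Rightarrow> real^3"
    and h :: "real^2 \<Rightarrow> real" and g :: "real^2 \<Rightarrow> real^2"
  assumes open_domain: "open \<Omega>" and frontier_point: "p \<in> frontier \<Omega>" and radius_pos: "0 < r"
    and orthogonal_Q: "orthogonal_transformation Q"
    and has_gradient: "\<And>z. (h has_derivative (\<lambda>v. g z \<bullet> v)) (at z)"
    and continuous_gradient: "continuous_on UNIV g"
    and below_graph: "\<And>x. x \<in> ball p r \<Longrightarrow>
      x \<in> \<Omega> \<longleftrightarrow> Q (x - p) $ 3 < h (vector [Q (x - p) $ 1, Q (x - p) $ 2])"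
begin

definition chart :: "real^3 \<Rightarrow> real^3" where
  "chart x = Q (x - p)"

definition base :: "real^3 \<Rightarrow> real^2" where
  "base x = vector [chart x $ 1, chart x $ 2]"

lemma linear_Q: "linear Q"
  using orthogonal_Q by (rule orthogonal_transformation_linear)

lemma norm_Q: "norm (Q v) = norm v"
  using orthogonal_Q orthogonal_transformation by blast

lemma inner_Q: "Q v \<bullet> Q w = v \<bullet> w"
  using orthogonal_Q by (simp add: orthogonal_transformation_def)

lemma in_domain_iff: "x \<in> ball p r \<Longrightarrow> x \<in> \<Omega> \<longleftrightarrow> chart x $ 3 < h (base x)"
  using below_graph by (simp add: chart_def base_def)

lemma dist_chart: "dist (chart x) (chart y) = dist x y"
  using norm_Q[of "x - y"] linear_Q by (simp add: chart_def dist_norm linear_diff)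

lemma norm_chart: "norm (chart x) = norm (x - p)"
  by (simp add: chart_def norm_Q)

lemma norm_base_le: "norm (base x) \<le> norm (x - p)"
proof -
  have "(norm (base x))\<^sup>2 \<le> (norm (chart x))\<^sup>2"
    unfolding power2_norm_eq_inner by (simp add: base_def inner_vec_def sum_2 sum_3)
  then show ?thesis by (simp add: norm_chart power2_le_iff_abs_le)
qed

lemma chart_p: "chart p = 0" and base_p: "base p = 0"
  using linear_Q by (simp_all add: chart_def base_def linear_0 vec_eq_iff forall_2)

lemma continuous_on_chart: "continuous_on UNIV chart"
  using linear_Q unfolding chart_def
  by (intro continuous_on_compose2[OF linear_continuous_on[of Q]] continuous_intros)
     (auto simp: linear_conv_bounded_linear)

lemma continuous_on_h_base: "continuous_on UNIV (\<lambda>x. h (base x))"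
proof -
  have "continuous_on UNIV h"
    using has_gradient by (meson continuous_at_imp_continuous_on has_derivative_continuous)
  moreover have "base = (\<lambda>x. chart x $ 1 *\<^sub>R axis 1 1 + chart x $ 2 *\<^sub>R axis 2 1)"
    by (auto simp: base_def vec_eq_iff forall_2 axis_def)
  then have "continuous_on UNIV base"
    using continuous_on_chart by (auto intro!: continuous_intros continuous_on_component)
  ultimately show ?thesis by (rule continuous_on_compose2) auto
qed

lemma not_in_closure_above_graph:
  assumes "x \<in> ball p r" and "h (base x) < chart x $ 3"
  shows "x \<notin> closure \<Omega>"
proof -
  define U where "U = ball p r \<inter> {x. h (base x) < chart x $ 3}"
  have "open U" unfolding U_def
    using continuous_on_h_base continuous_on_chart
    by (intro open_Int open_ball open_Collect_less) (auto intro: continuous_on_component)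
  moreover have "U \<inter> \<Omega> = {}" using in_domain_iff by (auto simp: U_def)
  ultimately have "U \<inter> closure \<Omega> = {}" using open_Int_closure_eq_empty by blast
  then show ?thesis using assms by (auto simp: U_def)
qed

lemma frontier_on_graph:
  assumes "x \<in> frontier \<Omega>" and "x \<in> ball p r"
  shows "chart x $ 3 = h (base x)"
proof -
  have "x \<notin> \<Omega>" "x \<in> closure \<Omega>" using assms(1) open_domain by (auto simp: frontier_def interior_open)
  then show ?thesis
    using in_domain_iff[OF assms(2)] not_in_closure_above_graph[OF assms(2)] by fastforce
qed

lemma h_0: "h 0 = 0"
  using frontier_on_graph[OF frontier_point] radius_pos by (simp add: chart_p base_p)

lemma h_first_order:
  assumes "e > 0"
  shows "\<exists>d>0. \<forall>y. norm y < d \<longrightarrow> \<bar>h y - g 0 \<bullet> y\<bar> \<le> e * norm y"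
  using has_gradient[of 0] assms unfolding has_derivative_at_alt by (simp add: h_0)

text \<open>Read in chart coordinates, the outer normal at p is the upward normal of the graph of h at 0.\<close>
definition graph_normal :: "real^3" where
  "graph_normal = vector [- (g 0 $ 1), - (g 0 $ 2), 1]"

lemma graph_normal_nonzero: "graph_normal \<noteq> 0"
  unfolding graph_normal_def by (metis vector_3(3) zero_index zero_neq_one)

lemma inner_graph_normal: "graph_normal \<bullet> w = w $ 3 - g 0 \<bullet> vector [w $ 1, w $ 2]"
  by (simp add: graph_normal_def inner_vec_def sum_2 sum_3)

lemma outer_normal_at_exists: "outer_normal_at \<Omega> p n"
  if "Q n = (1 / norm graph_normal) *\<^sub>R graph_normal"
proof -
  define m where "m = norm graph_normal"
  have m: "m > 0" using graph_normal_nonzero by (simp add: m_def)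
  have n_dist: "n \<bullet> (x - p) = (chart x $ 3 - g 0 \<bullet> base x) / m" for x
    using inner_Q[of n "x - p"] that inner_graph_normal[of "chart x"]
    by (simp add: chart_def base_def m_def)
  have "\<exists>\<delta>>0. \<forall>x\<in>ball p \<delta>. (x \<in> \<Omega> \<longrightarrow> n \<bullet> (x - p) \<le> e * norm (x - p)) \<and>
        (x \<notin> closure \<Omega> \<longrightarrow> n \<bullet> (x - p) \<ge> - e * norm (x - p))" if e: "e > 0" for e
  proof -
    obtain d where d: "d > 0" "\<And>y. norm y < d \<Longrightarrow> \<bar>h y - g 0 \<bullet> y\<bar> \<le> (e * m) * norm y"
      using h_first_order[of "e * m"] e m by auto
    have "(x \<in> \<Omega> \<longrightarrow> n \<bullet> (x - p) \<le> e * norm (x - p)) \<and>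
        (x \<notin> closure \<Omega> \<longrightarrow> n \<bullet> (x - p) \<ge> - e * norm (x - p))" if x: "x \<in> ball p (min r d)" for x
    proof -
      have "norm (base x) < d" using x norm_base_le[of x] by (simp add: dist_norm norm_minus_commute)
      then have "\<bar>h (base x) - g 0 \<bullet> base x\<bar> \<le> e * m * norm (x - p)"
        using d(2) norm_base_le[of x] e m by (smt (verit) mult_left_mono mult_pos_pos)
      moreover have "x \<in> \<Omega> \<longleftrightarrow> chart x $ 3 < h (base x)" using x in_domain_iff by simp
      ultimately show ?thesis using closure_subset[of \<Omega>] m
        unfolding n_dist by (auto simp: field_simps)
    qed
    then show ?thesis using d(1) radius_pos by (intro exI[of _ "min r d"]) auto
  qed
  moreover have "norm n = 1" using norm_Q[of n] that m by (simp add: m_def)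
  ultimately show ?thesis unfolding outer_normal_at_def by blast
qed

lemma exterior_ray:
  assumes "graph_normal \<bullet> Q z > 0"
  shows "\<exists>T>0. \<forall>t. 0 < t \<longrightarrow> t < T \<longrightarrow> p + t *\<^sub>R z \<notin> closure \<Omega>"
proof -
  define d where "d = Q z"
  define \<epsilon> where "\<epsilon> = (graph_normal \<bullet> d) / (2 * (norm d + 1))"
  have a: "graph_normal \<bullet> d > 0" using assms by (simp add: d_def)
  have nd: "0 < norm d + 1" using norm_ge_zero[of d] by linarith
  then have n: "0 < 2 * (norm d + 1)" "norm d / (2 * (norm d + 1)) < 1"
    by (simp_all add: divide_less_eq)
  have \<epsilon>: "\<epsilon> > 0" using a n(1) by (simp add: \<epsilon>_def)
  have "\<epsilon> * norm d = (graph_normal \<bullet> d) * (norm d / (2 * (norm d + 1)))" by (simp add: \<epsilon>_def)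
  also have "\<dots> < graph_normal \<bullet> d" using mult_strict_left_mono[OF n(2) a] by simp
  finally have \<epsilon>_less: "\<epsilon> * norm d < graph_normal \<bullet> d" .
  obtain dh where dh: "dh > 0" "\<And>y. norm y < dh \<Longrightarrow> \<bar>h y - g 0 \<bullet> y\<bar> \<le> \<epsilon> * norm y"
    using h_first_order[OF \<epsilon>] by auto
  define T where "T = min r dh / (norm d + 1)"
  have "p + t *\<^sub>R z \<notin> closure \<Omega>" if t: "0 < t" "t < T" for t
  proof -
    define x where "x = p + t *\<^sub>R z"
    have chart_x: "chart x = t *\<^sub>R d"
      using linear_Q by (simp add: x_def chart_def d_def linear_scale)
    have base_x: "base x = t *\<^sub>R vector [d $ 1, d $ 2]"
      by (simp add: base_def chart_x vec_eq_iff forall_2)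
    have "norm (x - p) = t * norm d" using t by (simp add: x_def d_def norm_Q)
    also have "\<dots> < min r dh"
      using t norm_ge_zero[of d] radius_pos dh(1)
      by (simp add: T_def field_simps)
    finally have near: "norm (x - p) < min r dh" .
    then have "norm (base x) < dh" using norm_base_le[of x] by linarith
    then have "h (base x) \<le> g 0 \<bullet> base x + \<epsilon> * norm (x - p)"
      using dh(2) norm_base_le[of x] \<epsilon> by (smt (verit) mult_left_mono)
    also have "\<dots> = t * (g 0 \<bullet> vector [d $ 1, d $ 2] + \<epsilon> * norm d)"
      using \<open>norm (x - p) = t * norm d\<close> by (simp add: base_x algebra_simps)
    also have "\<dots> < t * d $ 3"
      using \<epsilon>_less t(1) inner_graph_normal[of d] by simp
    also have "\<dots> = chart x $ 3" by (simp add: chart_x)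
    finally show ?thesis
      using near not_in_closure_above_graph[of x] by (simp add: x_def dist_norm norm_minus_commute)
  qed
  moreover have "T > 0" using radius_pos dh(1) nd by (simp add: T_def)
  ultimately show ?thesis by blast
qed

lemma outer_normal_at_side:
  assumes normal: "outer_normal_at \<Omega> p n" and "graph_normal \<bullet> Q z > 0"
  shows "n \<bullet> z \<ge> 0"
proof (rule field_le_epsilon)
  fix e :: real assume "e > 0"
  have nz: "0 < norm z + 1" using norm_ge_zero[of z] by linarith
  define e' where "e' = e / (norm z + 1)"
  have e': "e' > 0" using \<open>e > 0\<close> nz by (simp add: e'_def)
  obtain \<delta> where \<delta>: "\<delta> > 0"
    "\<And>x. x \<in> ball p \<delta> \<Longrightarrow> x \<notin> closure \<Omega> \<Longrightarrow> n \<bullet> (x - p) \<ge> - e' * norm (x - p)"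
    using normal e' unfolding outer_normal_at_def by blast
  obtain T where T: "T > 0" "\<And>t. 0 < t \<Longrightarrow> t < T \<Longrightarrow> p + t *\<^sub>R z \<notin> closure \<Omega>"
    using exterior_ray[OF assms(2)] by blast
  define M where "M = min \<delta> T"
  have M: "0 < M" "M \<le> \<delta>" "M \<le> T" using \<delta>(1) T(1) by (simp_all add: M_def)
  from nz have k: "0 < norm z + 2" "norm z / (norm z + 2) < 1" "1 / (norm z + 2) < 1"
    by (simp_all add: divide_less_eq)
  define t where "t = M / (norm z + 2)"
  have "t * norm z = M * (norm z / (norm z + 2))" "t = M * (1 / (norm z + 2))"
    by (simp_all add: t_def)
  then have t: "0 < t" "t < T" "t * norm z < \<delta>"
    using M k mult_strict_left_mono[OF k(2) M(1)] mult_strict_left_mono[OF k(3) M(1)]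
    by (auto simp: t_def)
  have "t * (n \<bullet> z) \<ge> t * (- e' * norm z)"
    using \<delta>(2)[of "p + t *\<^sub>R z"] T(2)[OF t(1,2)] t by (simp add: dist_norm mult_ac)
  then have "n \<bullet> z \<ge> - e' * norm z" using t(1) by (metis mult_le_cancel_left_pos)
  moreover have "e' * norm z \<le> e"
    using nz \<open>e > 0\<close> by (simp add: e'_def field_simps)
  ultimately show "0 \<le> n \<bullet> z + e" by linarith
qed

lemma outer_normal_at_unique:
  assumes "outer_normal_at \<Omega> p n"
  shows "Q n = (1 / norm graph_normal) *\<^sub>R graph_normal"
proof -
  have "Q n \<bullet> d \<ge> 0" if "graph_normal \<bullet> d > 0" for d
  proof -
    obtain z where "Q z = d" using orthogonal_transformation_surj[OF orthogonal_Q] by (metis surjD)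
    then show ?thesis using outer_normal_at_side[OF assms, of z] that inner_Q[of n z] by simp
  qed
  then obtain c where c: "c \<ge> 0" "Q n = c *\<^sub>R graph_normal"
    using parallel_if_inner_nonneg_on_halfspace[OF graph_normal_nonzero] by blast
  moreover have "norm (Q n) = 1" using assms by (simp add: norm_Q outer_normal_at_def)
  ultimately have "c = 1 / norm graph_normal" using graph_normal_nonzero by (simp add: field_simps)
  with c show ?thesis by simp
qed

lemma norm_outer_normal: "norm (outer_normal \<Omega> p) = 1"
proof (rule norm_outer_normal_if_unique)
  obtain n0 where "Q n0 = (1 / norm graph_normal) *\<^sub>R graph_normal"
    using orthogonal_transformation_surj[OF orthogonal_Q] by (metis surjD)
  then show "\<exists>!n. outer_normal_at \<Omega> p n"
  proof (intro ex1I[of _ n0] outer_normal_at_exists)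
    fix n assume "outer_normal_at \<Omega> p n"
    then have "Q n = Q n0" using outer_normal_at_unique \<open>Q n0 = _\<close> by simp
    then show "n = n0" using orthogonal_transformation_inj[OF orthogonal_Q] by (simp add: inj_eq)
  qed
qed

lemma small_cover_frontier_patch: "\<exists>B. \<forall>\<delta>>0. small_cover \<delta> (frontier \<Omega> \<inter> ball p r) B"
proof -
  obtain L where L: "L > 0" "\<And>u v. u \<in> cball 0 r \<Longrightarrow> v \<in> cball 0 r \<Longrightarrow> \<bar>h u - h v\<bar> \<le> L * norm (u - v)"
    using lipschitz_on_cball_if_continuous_gradient[OF has_gradient continuous_gradient] by blast
  have near: "norm (chart x) < r" "base x \<in> cball 0 r" if "x \<in> ball p r" for x
    using that norm_base_le[of x] by (auto simp: norm_chart dist_norm norm_minus_commute)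
  have "small_cover \<delta> (frontier \<Omega> \<inter> ball p r) (pi * (2 + 2 * L)\<^sup>2 * r\<^sup>2)" if "\<delta> > 0" for \<delta>
  proof (rule small_cover_lipschitz_graph[where w = chart])
    fix x y assume x: "x \<in> frontier \<Omega> \<inter> ball p r" and y: "y \<in> frontier \<Omega> \<inter> ball p r"
    have "\<bar>chart x $ 3 - chart y $ 3\<bar> = \<bar>h (base x) - h (base y)\<bar>"
      using x y by (simp add: frontier_on_graph)
    also have "\<dots> \<le> L * norm (base x - base y)" using L(2) near x y by simp
    also have "\<dots> \<le> L * ((\<bar>chart x $ 1 - chart y $ 1\<bar>) + (\<bar>chart x $ 2 - chart y $ 2\<bar>))"
      using norm_le_l1_cart[of "base x - base y"] L(1) by (simp add: base_def sum_2)
    finally show "\<bar>chart x $ 3 - chart y $ 3\<bar>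
      \<le> L * ((\<bar>chart x $ 1 - chart y $ 1\<bar>) + (\<bar>chart x $ 2 - chart y $ 2\<bar>))" .
  next
    fix x assume "x \<in> frontier \<Omega> \<inter> ball p r"
    then show "\<bar>chart x $ 1\<bar> < r \<and> \<bar>chart x $ 2\<bar> < r"
      using near component_le_norm_cart[of "chart x"] by (meson IntD2 le_less_trans)
  qed (use dist_chart L(1) radius_pos that in auto)
  then show ?thesis by blast
qed

end

lemma C2_boundary_graph_chart:
  assumes "open \<Omega>" and "C2_boundary \<Omega>" and "p \<in> frontier \<Omega>"
  shows "\<exists>r Q h g. boundary_graph_chart \<Omega> p r Q h g"
proof -
  obtain r and Q :: "real^3 \<Rightarrow> real^3" and h :: "real^2 \<Rightarrow> real" and g :: "real^2 \<Rightarrow> real^2"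
    and H :: "real^2 \<Rightarrow> real^2^2" where "r > 0" "orthogonal_transformation Q"
      "\<forall>z. (h has_derivative (\<lambda>v. g z \<bullet> v)) (at z)"
      "\<forall>z. (g has_derivative (\<lambda>v. H z *v v)) (at z)"
      "\<forall>x\<in>ball p r. x \<in> \<Omega> \<longleftrightarrow> Q (x - p) $ 3 < h (vector [Q (x - p) $ 1, Q (x - p) $ 2])"
    using assms(2,3) unfolding C2_boundary_def by blast
  moreover from this(4) have "continuous_on UNIV g"
    by (meson continuous_at_imp_continuous_on has_derivative_continuous)
  ultimately show ?thesis
    using assms(1,3) unfolding boundary_graph_chart_def by blast
qed

lemma norm_outer_normal_frontier:
  assumes "open \<Omega>" and "C2_boundary \<Omega>" and "p \<in> frontier \<Omega>"
  shows "norm (outer_normal \<Omega> p) = 1"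
  using C2_boundary_graph_chart[OF assms] boundary_graph_chart.norm_outer_normal by blast

lemma emeasure_frontier_finite:
  assumes "open \<Omega>" and "bounded \<Omega>" and "C2_boundary \<Omega>"
  shows "emeasure surface_measure (frontier \<Omega>) < \<infinity>"
proof -
  have "\<forall>p\<in>frontier \<Omega>. \<exists>r. r > 0 \<and> (\<exists>B. \<forall>\<delta>>0. small_cover \<delta> (frontier \<Omega> \<inter> ball p r) B)"
  proof
    fix p assume "p \<in> frontier \<Omega>"
    then obtain r Q h g where "boundary_graph_chart \<Omega> p r Q h g"
      using C2_boundary_graph_chart[OF assms(1,3)] by blast
    then show "\<exists>r. r > 0 \<and> (\<exists>B. \<forall>\<delta>>0. small_cover \<delta> (frontier \<Omega> \<inter> ball p r) B)"
      using boundary_graph_chart.small_cover_frontier_patch boundary_graph_chart.radius_pos by blast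
  qed
  then obtain R where R: "\<forall>p\<in>frontier \<Omega>. R p > 0 \<and> (\<exists>B. \<forall>\<delta>>0. small_cover \<delta> (frontier \<Omega> \<inter> ball p (R p)) B)"
    by (rule bchoice[elim_format]) blast
  then obtain B where B: "\<forall>p\<in>frontier \<Omega>. \<forall>\<delta>>0. small_cover \<delta> (frontier \<Omega> \<inter> ball p (R p)) (B p)"
    by (metis (no_types, lifting) bchoice)
  have "frontier \<Omega> \<subseteq> (\<Union>p\<in>frontier \<Omega>. ball p (R p))" using R by force
  then obtain T where T: "T \<subseteq> frontier \<Omega>" "finite T" "frontier \<Omega> \<subseteq> (\<Union>p\<in>T. ball p (R p))"
    using compactE_image[OF compact_frontier_bounded[OF assms(2)], of "frontier \<Omega>" "\<lambda>p. ball p (R p)"]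
    by blast
  have "small_cover \<delta> (frontier \<Omega>) (\<Sum>p\<in>T. B p)" if "\<delta> > 0" for \<delta>
  proof -
    have "small_cover \<delta> (\<Union>p\<in>T. frontier \<Omega> \<inter> ball p (R p)) (\<Sum>p\<in>T. B p)"
      by (rule small_cover_UN[OF T(2)]) (use B T(1) that in blast)
    moreover have "frontier \<Omega> = (\<Union>p\<in>T. frontier \<Omega> \<inter> ball p (R p))" using T(3) by blast
    ultimately show ?thesis by simp
  qed
  then have "emeasure surface_measure (frontier \<Omega>) \<le> ennreal (\<Sum>p\<in>T. B p)"
    by (rule emeasure_surface_measure_le_small_cover)
  then show ?thesis by (simp add: le_less_trans)
qed

section \<open>Potential estimates\<close>

lemma inverse_square_le_dyadic_sum:
  fixes x y :: "'a::metric_space"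
  assumes "R > 0"
  shows "indicator (ball x R) y * ennreal (1 / (dist x y)\<^sup>2)
     \<le> (\<Sum>n. ennreal (4 ^ (n + 1) / R\<^sup>2) * indicator (ball x (R / 2 ^ n)) y)"
proof (cases "y \<in> ball x R \<and> y \<noteq> x")
  case True
  define d where "d = dist x y"
  have d: "0 < d" "d < R" using True by (auto simp: d_def)
  obtain m where "R / d < 2 ^ m" using real_arch_pow[of 2 "R / d"] by auto
  then have ex: "\<exists>m. R / 2 ^ m \<le> d" using d by (intro exI[of _ m]) (auto simp: field_simps)
  define M where "M = (LEAST m. R / 2 ^ m \<le> d)"
  have M: "R / 2 ^ M \<le> d" unfolding M_def by (rule LeastI_ex[OF ex])
  then obtain n where n: "M = Suc n" using d by (cases M) auto
  have "d < R / 2 ^ n" using n not_less_Least[of n "\<lambda>m. R / 2 ^ m \<le> d"] by (simp add: M_def)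
  have "1 / d\<^sup>2 \<le> 1 / (R / 2 ^ (n + 1))\<^sup>2"
    using M n d assms by (intro divide_left_mono power_mono) auto
  also have "\<dots> = 4 ^ (n + 1) / R\<^sup>2"
  proof -
    have "((2::real) ^ (n + 1))\<^sup>2 = 4 ^ (n + 1)"
      unfolding power2_eq_square power_mult_distrib[symmetric] by simp
    then show ?thesis by (simp add: power_divide)
  qed
  finally have "indicator (ball x R) y * ennreal (1 / (dist x y)\<^sup>2)
      \<le> ennreal (4 ^ (n + 1) / R\<^sup>2) * indicator (ball x (R / 2 ^ n)) y"
    using True \<open>d < R / 2 ^ n\<close> by (simp add: d_def ennreal_leI)
  also have "\<dots> \<le> (\<Sum>n. ennreal (4 ^ (n + 1) / R\<^sup>2) * indicator (ball x (R / 2 ^ n)) y)"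
    using sum_le_suminf[OF summableI, of "{n}"] by simp
  finally show ?thesis .
qed auto

lemma nn_integral_inverse_square_ball:
  fixes x :: "real^3"
  assumes "R > 0"
  shows "(\<integral>\<^sup>+y. ennreal ((indicator (ball x R) y / dist x y)\<^sup>2) \<partial>lebesgue)
     \<le> ennreal (8 * unit_ball_vol 3 * R)"
proof -
  have "(\<integral>\<^sup>+y. ennreal ((indicator (ball x R) y / dist x y)\<^sup>2) \<partial>lebesgue)
      = (\<integral>\<^sup>+y. indicator (ball x R) y * ennreal (1 / (dist x y)\<^sup>2) \<partial>lborel)"
    by (subst nn_integral_completion) (auto intro!: nn_integral_cong simp: indicator_def power_divide)
  also have "\<dots>
     \<le> (\<integral>\<^sup>+y. (\<Sum>n. ennreal (4 ^ (n + 1) / R\<^sup>2) * indicator (ball x (R / 2 ^ n)) y) \<partial>lborel)"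
    by (intro nn_integral_mono inverse_square_le_dyadic_sum assms)
  also have "\<dots> = (\<Sum>n. \<integral>\<^sup>+y. ennreal (4 ^ (n + 1) / R\<^sup>2) * indicator (ball x (R / 2 ^ n)) y \<partial>lborel)"
    by (intro nn_integral_suminf borel_measurable_times_ennreal borel_measurable_indicator) auto
  also have "\<dots> = (\<Sum>n. ennreal (4 ^ (n + 1) / R\<^sup>2 * (unit_ball_vol 3 * (R / 2 ^ n) ^ 3)))"
    using assms by (subst nn_integral_cmult_indicator)
      (auto simp: emeasure_ball ennreal_mult[symmetric] simp del: power_Suc)
  also have "\<dots> = (\<Sum>n. ennreal (4 * unit_ball_vol 3 * R * (1 / 2) ^ n))"
  proof (intro suminf_cong arg_cong[where f = ennreal])
    fix n :: nat
    have "(4::real) ^ (n + 1) = 4 * 2 ^ n * 2 ^ n" by (simp flip: power_mult_distrib)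
    then show "4 ^ (n + 1) / R\<^sup>2 * (unit_ball_vol 3 * (R / 2 ^ n) ^ 3) = 4 * unit_ball_vol 3 * R * (1 / 2) ^ n"
      using assms by (simp add: field_simps power2_eq_square power3_eq_cube)
  qed
  also have "\<dots> = ennreal (8 * unit_ball_vol 3 * R)"
  proof (rule suminf_ennreal_eq)
    show "(\<lambda>n. 4 * unit_ball_vol 3 * R * (1 / 2) ^ n) sums (8 * unit_ball_vol 3 * R)"
      using sums_mult[OF geometric_sums[of "1 / 2 :: real"], of "4 * unit_ball_vol 3 * R"]
      by (simp add: mult.assoc)
  qed (use assms in auto)
  finally show ?thesis .
qed

lemma nn_integral_sqrt_sq_eq_set_integral:
  fixes P :: "'a \<Rightarrow> real"
  assumes "\<And>y. 0 \<le> P y" and "set_integrable M A P"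
  shows "(\<integral>\<^sup>+y. ennreal ((sqrt (indicator A y * P y))\<^sup>2) \<partial>M) = ennreal (LINT y:A|M. P y)"
  using assms unfolding set_lebesgue_integral_def set_integrable_def
  by (subst nn_integral_eq_integral[symmetric]) (auto intro!: nn_integral_cong simp: indicator_def)

lemma norm_set_integral_le_measure:
  fixes f :: "'a \<Rightarrow> 'b::{banach, second_countable_topology}"
  assumes "A \<in> sets M" and "emeasure M A < \<infinity>" and "0 \<le> B"
    and bound: "AE x in M. x \<in> A \<longrightarrow> norm (f x) \<le> B"
  shows "norm (LINT x:A|M. f x) \<le> B * measure M A"
proof (cases "set_integrable M A f")
  case True
  have "norm (LINT x:A|M. f x) \<le> (LINT x:A|M. norm (f x))"
    using True by (rule set_integral_norm_bound)
  also have "\<dots> \<le> (LINT x:A|M. B)"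
    using True assms(1,2) bound
    by (intro set_integral_mono_AE set_integrable_norm)
      (auto simp: set_integrable_def intro: integrable_real_indicator)
  also have "\<dots> = B * measure M A" using assms(1,2) by (simp add: set_integral_const)
  finally show ?thesis .
next
  case False
  then show ?thesis
    using assms(3) by (simp add: set_lebesgue_integral_def set_integrable_def not_integrable_integral_eq)
qed

lemma set_integral_sum:
  fixes f :: "'i \<Rightarrow> 'a \<Rightarrow> 'b::{banach, second_countable_topology}"
  assumes "\<And>i. i \<in> I \<Longrightarrow> set_integrable M A (f i)"
  shows "set_integrable M A (\<lambda>x. \<Sum>i\<in>I. f i x)"
    and "(LINT x:A|M. \<Sum>i\<in>I. f i x) = (\<Sum>i\<in>I. LINT x:A|M. f i x)"
  using assms unfolding set_integrable_def set_lebesgue_integral_def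
  by (simp_all add: scaleR_sum_right)

lemma set_integral_sq_Cauchy_Schwarz:
  fixes f :: "'a \<Rightarrow> 'b::{banach, second_countable_topology}"
  assumes [measurable]: "a \<in> borel_measurable M" "b \<in> borel_measurable M"
    and nonneg: "\<And>y. 0 \<le> a y" "\<And>y. 0 \<le> b y"
    and bound: "\<And>y. y \<in> A \<Longrightarrow> norm (f y) \<le> a y * b y"
  shows "ennreal ((norm (LINT y:A|M. f y))\<^sup>2)
    \<le> (\<integral>\<^sup>+y. ennreal ((a y)\<^sup>2) \<partial>M) * (\<integral>\<^sup>+y. ennreal ((b y)\<^sup>2) \<partial>M)"
proof (cases "set_integrable M A f")
  case True
  have "ennreal (norm (LINT y:A|M. f y)) \<le> (\<integral>\<^sup>+y. ennreal (norm (indicator A y *\<^sub>R f y)) \<partial>M)"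
    using True unfolding set_lebesgue_integral_def set_integrable_def
    by (rule integral_norm_bound_ennreal)
  also have "\<dots> \<le> (\<integral>\<^sup>+y. ennreal (a y) * ennreal (b y) \<partial>M)"
  proof (rule nn_integral_mono)
    fix y
    have "ennreal (norm (indicator A y *\<^sub>R f y)) \<le> ennreal (a y * b y)"
      using bound[of y] nonneg[of y] by (auto simp: indicator_def intro!: ennreal_leI)
    then show "ennreal (norm (indicator A y *\<^sub>R f y)) \<le> ennreal (a y) * ennreal (b y)"
      by (simp add: ennreal_mult'[OF nonneg(1)])
  qed
  finally have "(ennreal (norm (LINT y:A|M. f y)))\<^sup>2 \<le> (\<integral>\<^sup>+y. ennreal (a y) * ennreal (b y) \<partial>M)\<^sup>2"
    by (rule power_mono) simp
  also have "\<dots> \<le> (\<integral>\<^sup>+y. (ennreal (a y))\<^sup>2 \<partial>M) * (\<integral>\<^sup>+y. (ennreal (b y))\<^sup>2 \<partial>M)"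
    by (rule Cauchy_Schwarz_nn_integral) measurable
  finally show ?thesis by (simp add: ennreal_power nonneg)
next
  case False
  then show ?thesis
    by (simp add: set_lebesgue_integral_def set_integrable_def not_integrable_integral_eq)
qed

lemma norm_potential_sq_le:
  fixes x :: "real^3" and K G :: "real^3 \<Rightarrow> complex" and P :: "real^3 \<Rightarrow> real"
  assumes R: "0 < R" and sub: "\<Omega> \<subseteq> ball x R" and E: "0 \<le> E" and Cg: "0 \<le> Cg"
    and kernel: "\<And>y. y \<in> \<Omega> \<Longrightarrow> norm (K y) \<le> E / dist x y"
    and density: "\<And>y. y \<in> \<Omega> \<Longrightarrow> norm (G y) \<le> Cg * sqrt (P y)"
    and P: "\<And>y. 0 \<le> P y" "set_integrable lebesgue \<Omega> P"
  shows "(norm (LINT y:\<Omega>|lebesgue. K y * G y))\<^sup>2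
     \<le> E\<^sup>2 * Cg\<^sup>2 * (8 * unit_ball_vol 3 * R) * (LINT y:\<Omega>|lebesgue. P y)"
proof -
  define a where "a y = indicator (ball x R) y / dist x y" for y
  define b where "b y = sqrt (indicator \<Omega> y * P y)" for y
  have [measurable]: "ball x R \<in> sets borel" by simp
  have "a \<in> borel_measurable lborel" unfolding a_def by measurable
  then have a_meas: "(\<lambda>y. E * Cg * a y) \<in> borel_measurable lebesgue"
    by (intro borel_measurable_times measurable_completion) simp_all
  have "(\<lambda>y. indicator \<Omega> y *\<^sub>R P y) \<in> borel_measurable lebesgue"
    using P(2) unfolding set_integrable_def by (rule borel_measurable_integrable)
  then have b_meas: "b \<in> borel_measurable lebesgue" unfolding b_def by simp
  have "ennreal ((norm (LINT y:\<Omega>|lebesgue. K y * G y))\<^sup>2)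
     \<le> (\<integral>\<^sup>+y. ennreal ((E * Cg * a y)\<^sup>2) \<partial>lebesgue) * (\<integral>\<^sup>+y. ennreal ((b y)\<^sup>2) \<partial>lebesgue)"
  proof (rule set_integral_sq_Cauchy_Schwarz[OF a_meas b_meas])
    fix y assume y: "y \<in> \<Omega>"
    have "norm (K y * G y) \<le> (E / dist x y) * (Cg * sqrt (P y))"
      unfolding norm_mult using kernel[OF y] density[OF y] E by (intro mult_mono) auto
    then show "norm (K y * G y) \<le> E * Cg * a y * b y" using y sub by (auto simp: a_def b_def)
  qed (use E Cg P(1) in \<open>auto simp: a_def b_def\<close>)
  also have "\<dots> = ennreal ((E * Cg)\<^sup>2) * (\<integral>\<^sup>+y. ennreal ((a y)\<^sup>2) \<partial>lebesgue)
      * ennreal (LINT y:\<Omega>|lebesgue. P y)"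
    using \<open>a \<in> borel_measurable lborel\<close>
    by (simp add: nn_integral_sqrt_sq_eq_set_integral[OF P] b_def power_mult_distrib ennreal_mult'
        nn_integral_cmult measurable_completion)
  also have "\<dots> \<le> ennreal ((E * Cg)\<^sup>2) * ennreal (8 * unit_ball_vol 3 * R) * ennreal (LINT y:\<Omega>|lebesgue. P y)"
    using nn_integral_inverse_square_ball[OF R, of x]
    by (intro mult_right_mono mult_left_mono) (simp_all add: a_def)
  also have "\<dots> = ennreal (E\<^sup>2 * Cg\<^sup>2 * (8 * unit_ball_vol 3 * R) * (LINT y:\<Omega>|lebesgue. P y))"
    using R by (simp add: ennreal_mult' power_mult_distrib mult_ac)
  finally have "ennreal ((norm (LINT y:\<Omega>|lebesgue. K y * G y))\<^sup>2)
     \<le> ennreal (E\<^sup>2 * Cg\<^sup>2 * (8 * unit_ball_vol 3 * R) * (LINT y:\<Omega>|lebesgue. P y))" .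
  moreover have "0 \<le> (LINT y:\<Omega>|lebesgue. P y)"
    unfolding set_lebesgue_integral_def using P(1) by (intro integral_nonneg_AE) simp
  ultimately show ?thesis using R by (simp add: ennreal_le_iff)
qed

section \<open>Pointwise bounds on the source term\<close>

lemma cv_nth [simp]: "cv v $ j = complex_of_real (v $ j)"
  by (simp add: cv_def)

lemma norm_ccross_nth_le:
  fixes a b :: "complex^3"
  assumes a: "\<And>j. cmod (a $ j) \<le> A" and b: "\<And>j. cmod (b $ j) \<le> 1"
  shows "cmod (ccross a b $ i) \<le> 2 * A"
proof -
  have A: "0 \<le> A" using order_trans[OF norm_ge_zero a] .
  have "cmod (a $ j * b $ k) \<le> A" for j k
    using mult_mono[OF a[of j] b[of k] A norm_ge_zero] by (simp add: norm_mult)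
  then have "cmod (a $ j * b $ k - a $ j' * b $ k') \<le> 2 * A" for j k j' k'
    by (smt (verit) norm_triangle_ineq4)
  then show ?thesis using exhaust_3[of i] by (auto simp: ccross_def)
qed

lemma norm_cdot_le_sum:
  fixes a b :: "complex^3"
  shows "cmod (cdot a b) \<le> (\<Sum>j\<in>UNIV. cmod (a $ j) * cmod (b $ j))"
  unfolding cdot_def using norm_sum[of "\<lambda>j. a $ j * b $ j" UNIV] by (simp add: norm_mult)

lemma norm_cdot_le:
  fixes a b :: "complex^3"
  assumes a: "\<And>j. cmod (a $ j) \<le> A" and b: "\<And>j. cmod (b $ j) \<le> 1"
  shows "cmod (cdot a b) \<le> 3 * A"
proof -
  have "cmod (cdot a b) \<le> (\<Sum>j\<in>UNIV. cmod (a $ j) * cmod (b $ j))" by (rule norm_cdot_le_sum)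
  also have "\<dots> \<le> (\<Sum>j\<in>(UNIV::3 set). A)"
    using mult_mono[OF a b order_trans[OF norm_ge_zero a] norm_ge_zero] by (intro sum_mono) simp
  finally show ?thesis by simp
qed

lemma norm_cdot_le_sq:
  fixes a b :: "complex^3"
  assumes a: "\<And>j. (cmod (a $ j))\<^sup>2 \<le> X" and b: "\<And>j. (cmod (b $ j))\<^sup>2 \<le> X"
  shows "cmod (cdot a b) \<le> 3 * X"
proof -
  have "cmod (cdot a b) \<le> (\<Sum>j\<in>UNIV. cmod (a $ j) * cmod (b $ j))" by (rule norm_cdot_le_sum)
  also have "\<dots> \<le> (\<Sum>j\<in>(UNIV::3 set). X)"
  proof (rule sum_mono)
    fix j
    have "2 * (cmod (a $ j) * cmod (b $ j)) \<le> (cmod (a $ j))\<^sup>2 + (cmod (b $ j))\<^sup>2"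
      using sum_squares_bound[of "cmod (a $ j)" "cmod (b $ j)"] by simp
    then show "cmod (a $ j) * cmod (b $ j) \<le> X" using a[of j] b[of j] by simp
  qed
  finally show ?thesis by simp
qed

lemma norm_mult_of_real_add_of_real_le:
  fixes c :: complex
  assumes "\<bar>u\<bar> \<le> S" and "\<bar>v\<bar> \<le> 2 * S"
  shows "cmod (c * complex_of_real u + complex_of_real v) \<le> cmod c * S + 2 * S"
proof -
  have "cmod (c * complex_of_real u + complex_of_real v) \<le> cmod c * \<bar>u\<bar> + \<bar>v\<bar>"
    using norm_triangle_ineq[of "c * complex_of_real u" "complex_of_real v"] by (simp add: norm_mult)
  also have "\<dots> \<le> cmod c * S + 2 * S" using assms by (intro add_mono mult_left_mono) auto
  finally show ?thesis .
qed

lemma norm_Gfun_nth_le: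
  fixes Je Jm :: "real^3 \<Rightarrow> real^3"
  assumes \<nu>: "norm (outer_normal \<Omega> x) = 1" and "0 \<le> \<epsilon>0" and "0 \<le> \<mu>0" and "0 \<le> S"
    and Je: "\<And>j. \<bar>Je y $ j\<bar> \<le> S" and Jm: "\<And>j. \<bar>Jm y $ j\<bar> \<le> S"
    and curl_Je: "\<And>j. \<bar>wcurl \<Omega> Je y $ j\<bar> \<le> 2 * S" and curl_Jm: "\<And>j. \<bar>wcurl \<Omega> Jm y $ j\<bar> \<le> 2 * S"
  shows "cmod (Gfun \<Omega> \<epsilon>0 \<mu>0 \<alpha> Je Jm x y \<omega> $ i)
      \<le> (2 * \<mu>0 + 4 * \<epsilon>0 + 12) * (1 + cmod \<omega>) * (1 + cmod (\<alpha> x)) * S"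
proof -
  define \<nu> where "\<nu> = cv (outer_normal \<Omega> x)"
  define a where "a = (\<i> * \<omega> * complex_of_real \<mu>0) *s cv (Je y) + cv (wcurl \<Omega> Jm y)"
  define F where "F = Ffun \<Omega> \<epsilon>0 Je Jm y \<omega>"
  define w where "w = cmod \<omega>"
  define A where "A = cmod (\<alpha> x)"
  have \<nu>_nth: "cmod (\<nu> $ j) \<le> 1" for j
    using component_le_norm_cart[of "outer_normal \<Omega> x" j] \<nu> by (simp add: \<nu>_def)
  have a_nth: "cmod (a $ j) \<le> w * \<mu>0 * S + 2 * S" for j
    using norm_mult_of_real_add_of_real_le[OF Je curl_Jm, of "\<i> * \<omega> * \<mu>0"] assms(3)
    by (simp add: a_def w_def norm_mult)
  have F_nth: "cmod (F $ j) \<le> w * \<epsilon>0 * S + 2 * S" for j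
    using norm_mult_of_real_add_of_real_le[OF Jm curl_Je, of "- \<i> * \<omega> * \<epsilon>0"] assms(2)
    by (simp add: F_def Ffun_def w_def norm_mult)
  have tangential: "cmod ((F - cdot F \<nu> *s \<nu>) $ i) \<le> 4 * (w * \<epsilon>0 * S + 2 * S)"
  proof -
    have "cmod ((F - cdot F \<nu> *s \<nu>) $ i) \<le> cmod (F $ i) + cmod (cdot F \<nu>) * cmod (\<nu> $ i)"
      using norm_triangle_ineq4[of "F $ i" "cdot F \<nu> * \<nu> $ i"] by (simp add: norm_mult)
    also have "\<dots> \<le> (w * \<epsilon>0 * S + 2 * S) + 3 * (w * \<epsilon>0 * S + 2 * S) * 1"
      using F_nth[of i] norm_cdot_le[OF F_nth \<nu>_nth] \<nu>_nth[of i] assms(2,4)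
      by (intro add_mono mult_mono) (auto simp: w_def)
    finally show ?thesis by (simp add: algebra_simps)
  qed
  have "Gfun \<Omega> \<epsilon>0 \<mu>0 \<alpha> Je Jm x y \<omega> $ i = ccross a \<nu> $ i - \<alpha> x * (F - cdot F \<nu> *s \<nu>) $ i"
    by (simp add: Gfun_def Let_def a_def F_def \<nu>_def right_diff_distrib)
  then have "cmod (Gfun \<Omega> \<epsilon>0 \<mu>0 \<alpha> Je Jm x y \<omega> $ i)
      \<le> cmod (ccross a \<nu> $ i) + A * cmod ((F - cdot F \<nu> *s \<nu>) $ i)"
    using norm_triangle_ineq4[of "ccross a \<nu> $ i" "\<alpha> x * (F - cdot F \<nu> *s \<nu>) $ i"]
    by (simp add: A_def norm_mult)
  also have "\<dots> \<le> 2 * (w * \<mu>0 * S + 2 * S) + A * (4 * (w * \<epsilon>0 * S + 2 * S))"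
    using norm_ccross_nth_le[OF a_nth \<nu>_nth] tangential by (intro add_mono mult_left_mono) (auto simp: A_def)
  also have "\<dots> \<le> (2 * \<mu>0 + 4 * \<epsilon>0 + 12) * (1 + w) * (1 + A) * S"
  proof -
    have "0 \<le> (8 + 2 * \<mu>0 + 4 * \<epsilon>0) * S + (12 + 4 * \<epsilon>0) * (w * S)
        + (4 + 2 * \<mu>0 + 4 * \<epsilon>0) * (A * S) + (12 + 2 * \<mu>0) * (w * A * S)"
      using assms(2-4) by (simp add: w_def A_def)
    then show ?thesis by (simp add: algebra_simps)
  qed
  finally show ?thesis by (simp add: w_def A_def)
qed

definition H1_density :: "(real^3) set \<Rightarrow> (real^3 \<Rightarrow> real^3) \<Rightarrow> real^3 \<Rightarrow> real" where
  "H1_density \<Omega> J y = (\<Sum>i\<in>UNIV. (J y $ i)\<^sup>2 + (\<Sum>j\<in>UNIV. (wpd \<Omega> (\<lambda>y. J y $ i) j y)\<^sup>2))"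

lemma H1_density_nonneg: "0 \<le> H1_density \<Omega> J y"
  unfolding H1_density_def by (intro sum_nonneg add_nonneg_nonneg) auto

lemma H1_density_ge:
  "(J y $ i)\<^sup>2 + (\<Sum>j\<in>UNIV. (wpd \<Omega> (\<lambda>y. J y $ i) j y)\<^sup>2) \<le> H1_density \<Omega> J y"
  unfolding H1_density_def
  by (rule member_le_sum[where f = "\<lambda>i. (J y $ i)\<^sup>2 + (\<Sum>j\<in>UNIV. (wpd \<Omega> (\<lambda>y. J y $ i) j y)\<^sup>2)"])
     (auto intro!: add_nonneg_nonneg sum_nonneg)

lemma abs_nth_le_sqrt_H1_density: "\<bar>J y $ i\<bar> \<le> sqrt (H1_density \<Omega> J y)"
proof -
  have "(J y $ i)\<^sup>2 \<le> H1_density \<Omega> J y"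
    using H1_density_ge[of J y i \<Omega>] sum_nonneg[of UNIV "\<lambda>j. (wpd \<Omega> (\<lambda>y. J y $ i) j y)\<^sup>2"] by simp
  then show ?thesis using real_sqrt_le_mono by fastforce
qed

lemma abs_wpd_le_sqrt_H1_density: "\<bar>wpd \<Omega> (\<lambda>y. J y $ i) j y\<bar> \<le> sqrt (H1_density \<Omega> J y)"
proof -
  have "(wpd \<Omega> (\<lambda>y. J y $ i) j y)\<^sup>2 \<le> (\<Sum>j\<in>UNIV. (wpd \<Omega> (\<lambda>y. J y $ i) j y)\<^sup>2)"
    by (rule member_le_sum) auto
  then have "(wpd \<Omega> (\<lambda>y. J y $ i) j y)\<^sup>2 \<le> H1_density \<Omega> J y"
    using H1_density_ge[of J y i \<Omega>] zero_le_power2[of "J y $ i"] by linarith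
  then show ?thesis using real_sqrt_le_mono by fastforce
qed

lemma abs_wcurl_le_sqrt_H1_density: "\<bar>wcurl \<Omega> J y $ j\<bar> \<le> 2 * sqrt (H1_density \<Omega> J y)"
proof -
  have "\<bar>wpd \<Omega> (\<lambda>y. J y $ a) b y - wpd \<Omega> (\<lambda>y. J y $ c) d y\<bar> \<le> 2 * sqrt (H1_density \<Omega> J y)"
    for a b c d
    using abs_wpd_le_sqrt_H1_density[of \<Omega> J a b y] abs_wpd_le_sqrt_H1_density[of \<Omega> J c d y] by linarith
  then show ?thesis using exhaust_3[of j] by (auto simp: wcurl_def)
qed

lemma H1_density_integral:
  assumes "in_H1 \<Omega> J"
  shows "set_integrable lebesgue \<Omega> (H1_density \<Omega> J)"
    and "(LINT y:\<Omega>|lebesgue. H1_density \<Omega> J y) = H1_norm_sq \<Omega> J"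
proof -
  have comp: "set_integrable lebesgue \<Omega> (\<lambda>y. (J y $ i)\<^sup>2)" for i
    using assms unfolding in_H1_def L2_def by blast
  have "L2 \<Omega> (wpd \<Omega> (\<lambda>y. J y $ i) j)" for i j
    using assms unfolding in_H1_def wpd_def by (metis (mono_tags, lifting) someI_ex)
  then have deriv: "set_integrable lebesgue \<Omega> (\<lambda>y. (wpd \<Omega> (\<lambda>y. J y $ i) j y)\<^sup>2)" for i j
    unfolding L2_def by blast
  show "set_integrable lebesgue \<Omega> (H1_density \<Omega> J)"
    unfolding H1_density_def[abs_def] using comp deriv
    by (intro set_integral_sum set_integral_add) auto
  show "(LINT y:\<Omega>|lebesgue. H1_density \<Omega> J y) = H1_norm_sq \<Omega> J"
    unfolding H1_density_def H1_norm_sq_def using comp deriv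
    by (simp add: set_integral_sum set_integral_add)
qed

lemma H1_norm_sq_nonneg:
  assumes "in_H1 \<Omega> J"
  shows "0 \<le> H1_norm_sq \<Omega> J"
proof -
  have "0 \<le> (LINT y:\<Omega>|lebesgue. H1_density \<Omega> J y)"
    unfolding set_lebesgue_integral_def by (intro integral_nonneg_AE) (simp add: H1_density_nonneg)
  then show ?thesis using H1_density_integral(2)[OF assms] by simp
qed

section \<open>Bounds on the integrand of I0\<close>

text \<open>u(x, \<omega>), the value of E \<times> \<nu> - \<alpha> H_\<tau> at the boundary point x given by the radiating
  solution; the integrand of I0 is u(x, \<omega>) \<cdot> u(x, -\<omega>).\<close>
definition boundary_field ::
  "(real^3) set \<Rightarrow> real \<Rightarrow> real \<Rightarrow> (real^3 \<Rightarrow> complex) \<Rightarrow> (real^3 \<Rightarrow> real^3) \<Rightarrow> (real^3 \<Rightarrow> real^3)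
    \<Rightarrow> real^3 \<Rightarrow> complex \<Rightarrow> complex^3" where
  "boundary_field \<Omega> \<epsilon>0 \<mu>0 \<alpha> Je Jm x \<omega> =
     (let \<kappa> = \<omega> * complex_of_real (sqrt (\<epsilon>0 * \<mu>0)) in
      \<chi> i. LINT y:\<Omega>|lebesgue. exp (\<i> * \<kappa> * dist x y) / (4 * pi * dist x y) * Gfun \<Omega> \<epsilon>0 \<mu>0 \<alpha> Je Jm x y \<omega> $ i)"

lemma I0_eq_boundary_field:
  "I0 \<Omega> \<epsilon>0 \<mu>0 \<alpha> Je Jm k = 2 * contour_integral (linepath 0 k) (\<lambda>\<omega>.
     LINT x:frontier \<Omega>|surface_measure.
       cdot (boundary_field \<Omega> \<epsilon>0 \<mu>0 \<alpha> Je Jm x \<omega>) (boundary_field \<Omega> \<epsilon>0 \<mu>0 \<alpha> Je Jm x (- \<omega>)))"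
  by (simp add: I0_def boundary_field_def Let_def)

lemma norm_Helmholtz_kernel_le:
  fixes \<kappa> :: complex
  assumes "0 \<le> d" and "d \<le> D"
  shows "cmod (exp (\<i> * \<kappa> * d) / (4 * pi * d)) \<le> exp (\<bar>Im \<kappa>\<bar> * D) / (4 * pi) / d"
proof (cases "d = 0")
  case False
  then have "0 < d" using assms(1) by simp
  have "cmod (exp (\<i> * \<kappa> * d) / (4 * pi * d)) = exp (- Im \<kappa> * d) / (4 * pi * d)"
    using \<open>0 < d\<close> by (simp add: norm_divide norm_mult)
  also have "\<dots> \<le> exp (\<bar>Im \<kappa>\<bar> * D) / (4 * pi * d)"
  proof -
    have "- Im \<kappa> * d \<le> \<bar>Im \<kappa>\<bar> * d" using \<open>0 < d\<close> by (intro mult_right_mono) auto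
    also have "\<dots> \<le> \<bar>Im \<kappa>\<bar> * D" using assms by (intro mult_left_mono) auto
    finally show ?thesis using \<open>0 < d\<close> by (intro divide_right_mono) auto
  qed
  finally show ?thesis by simp
qed (simp \<comment> \<open>at d = 0 both sides are 0, as division by 0 gives 0\<close>)

lemma dist_le_diameter_frontier:
  assumes "bounded \<Omega>" and "x \<in> frontier \<Omega>" and "y \<in> \<Omega>"
  shows "dist x y \<le> diameter \<Omega>"
proof -
  have "x \<in> closure \<Omega>" "y \<in> closure \<Omega>" using assms(2,3) closure_subset by (auto simp: frontier_def)
  then have "dist x y \<le> diameter (closure \<Omega>)"
    using diameter_bounded_bound[of "closure \<Omega>" x y] bounded_closure[OF assms(1)] by simp
  then show ?thesis using diameter_closure[OF assms(1)] by simp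
qed

text \<open>The square of the bound on G, times the bound 8 |B_1| R on the integral of |x - y|^-2
  over a ball of radius R = diameter + 1 containing \<Omega>, divided by (4\<pi>)^2.\<close>
definition field_constant :: "(real^3) set \<Rightarrow> real \<Rightarrow> real \<Rightarrow> real \<Rightarrow> real" where
  "field_constant \<Omega> \<epsilon>0 \<mu>0 M =
     ((2 * \<mu>0 + 4 * \<epsilon>0 + 12) * (1 + M))\<^sup>2 * (8 * unit_ball_vol 3 * (diameter \<Omega> + 1)) / (4 * pi)\<^sup>2"

lemma field_constant_nonneg: "0 \<le> M \<Longrightarrow> bounded \<Omega> \<Longrightarrow> 0 \<le> field_constant \<Omega> \<epsilon>0 \<mu>0 M"
  unfolding field_constant_def by (simp add: diameter_ge_0 add_nonneg_nonneg)

lemma norm_Gfun_nth_le_H1_density: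
  fixes Je Jm :: "real^3 \<Rightarrow> real^3"
  assumes "open \<Omega>" and "C2_boundary \<Omega>" and "0 < \<epsilon>0" and "0 < \<mu>0"
    and "x \<in> frontier \<Omega>" and "cmod (\<alpha> x) \<le> M" and "cmod \<omega> \<le> K"
  shows "cmod (Gfun \<Omega> \<epsilon>0 \<mu>0 \<alpha> Je Jm x y \<omega> $ i)
    \<le> (2 * \<mu>0 + 4 * \<epsilon>0 + 12) * (1 + K) * (1 + M) * sqrt (H1_density \<Omega> Je y + H1_density \<Omega> Jm y)"
proof -
  define S where "S = sqrt (H1_density \<Omega> Je y + H1_density \<Omega> Jm y)"
  have S: "0 \<le> S" "sqrt (H1_density \<Omega> Je y) \<le> S" "sqrt (H1_density \<Omega> Jm y) \<le> S"
    using H1_density_nonneg by (simp_all add: S_def add_nonneg_nonneg)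
  have "cmod (Gfun \<Omega> \<epsilon>0 \<mu>0 \<alpha> Je Jm x y \<omega> $ i)
      \<le> (2 * \<mu>0 + 4 * \<epsilon>0 + 12) * (1 + cmod \<omega>) * (1 + cmod (\<alpha> x)) * S"
  proof (rule norm_Gfun_nth_le[OF norm_outer_normal_frontier[OF assms(1,2,5)]])
    show "\<bar>Je y $ j\<bar> \<le> S" "\<bar>Jm y $ j\<bar> \<le> S" for j
      using abs_nth_le_sqrt_H1_density[of Je y j \<Omega>] abs_nth_le_sqrt_H1_density[of Jm y j \<Omega>] S
      by linarith+
    show "\<bar>wcurl \<Omega> Je y $ j\<bar> \<le> 2 * S" "\<bar>wcurl \<Omega> Jm y $ j\<bar> \<le> 2 * S" for j
      using abs_wcurl_le_sqrt_H1_density[of \<Omega> Je y j] abs_wcurl_le_sqrt_H1_density[of \<Omega> Jm y j] S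
      by linarith+
  qed (use assms(3,4) S in simp_all)
  also have "\<dots> \<le> (2 * \<mu>0 + 4 * \<epsilon>0 + 12) * (1 + K) * (1 + M) * S"
    using assms(3,4,6,7) S order_trans[OF norm_ge_zero assms(7)] by (auto intro!: mult_right_mono mult_mono)
  finally show ?thesis by (simp add: S_def)
qed

lemma norm_boundary_field_nth_sq_le:
  fixes Je Jm :: "real^3 \<Rightarrow> real^3"
  assumes "open \<Omega>" and "bounded \<Omega>" and "C2_boundary \<Omega>" and "0 < \<epsilon>0" and "0 < \<mu>0"
    and "in_H1 \<Omega> Je" and "in_H1 \<Omega> Jm"
    and x: "x \<in> frontier \<Omega>" and "cmod (\<alpha> x) \<le> M" and "cmod \<omega> \<le> K" and "\<bar>Im \<omega>\<bar> \<le> T"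
  shows "(cmod (boundary_field \<Omega> \<epsilon>0 \<mu>0 \<alpha> Je Jm x \<omega> $ i))\<^sup>2
    \<le> field_constant \<Omega> \<epsilon>0 \<mu>0 M * (1 + K)\<^sup>2
       * exp (2 * diameter \<Omega> * sqrt (\<epsilon>0 * \<mu>0) * T) * (H1_norm_sq \<Omega> Je + H1_norm_sq \<Omega> Jm)"
proof -
  define s where "s = sqrt (\<epsilon>0 * \<mu>0)"
  define D where "D = diameter \<Omega>"
  define E where "E = exp (s * T * D) / (4 * pi)"
  define Cg where "Cg = (2 * \<mu>0 + 4 * \<epsilon>0 + 12) * (1 + K) * (1 + M)"
  define P where "P y = H1_density \<Omega> Je y + H1_density \<Omega> Jm y" for y
  have M: "0 \<le> M" using assms(9) norm_ge_zero order_trans by blast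
  have K: "0 \<le> K" using assms(10) norm_ge_zero order_trans by blast
  have D: "0 \<le> D" using assms(2) by (simp add: D_def diameter_ge_0)
  have P: "0 \<le> P y" for y by (simp add: P_def H1_density_nonneg add_nonneg_nonneg)
  have P_int: "set_integrable lebesgue \<Omega> P"
    "(LINT y:\<Omega>|lebesgue. P y) = H1_norm_sq \<Omega> Je + H1_norm_sq \<Omega> Jm"
    using H1_density_integral[OF assms(6)] H1_density_integral[OF assms(7)]
    by (simp_all add: P_def[abs_def] set_integral_add)
  have "(cmod (boundary_field \<Omega> \<epsilon>0 \<mu>0 \<alpha> Je Jm x \<omega> $ i))\<^sup>2
      \<le> E\<^sup>2 * Cg\<^sup>2 * (8 * unit_ball_vol 3 * (D + 1)) * (LINT y:\<Omega>|lebesgue. P y)"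
    unfolding boundary_field_def Let_def vec_lambda_beta
  proof (rule norm_potential_sq_le[OF _ _ _ _ _ _ P P_int(1)])
    show "\<Omega> \<subseteq> ball x (D + 1)"
      using dist_le_diameter_frontier[OF assms(2) x] by (force simp: D_def)
    fix y assume "y \<in> \<Omega>"
    have "\<bar>Im (\<omega> * complex_of_real (sqrt (\<epsilon>0 * \<mu>0)))\<bar> = s * \<bar>Im \<omega>\<bar>" and "0 \<le> s"
      using assms(4,5) by (simp_all add: s_def abs_mult)
    then have "\<bar>Im (\<omega> * complex_of_real (sqrt (\<epsilon>0 * \<mu>0)))\<bar> * D \<le> s * T * D"
      using assms(11) D by (simp add: mult_left_mono mult_right_mono)
    then have "exp (\<bar>Im (\<omega> * complex_of_real (sqrt (\<epsilon>0 * \<mu>0)))\<bar> * D) / (4 * pi) / dist x y \<le> E / dist x y"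
      unfolding E_def by (intro divide_right_mono) simp_all
    then show "cmod (exp (\<i> * (\<omega> * complex_of_real (sqrt (\<epsilon>0 * \<mu>0))) * dist x y) / (4 * pi * dist x y))
        \<le> E / dist x y"
      using dist_le_diameter_frontier[OF assms(2) x \<open>y \<in> \<Omega>\<close>]
      by (intro order_trans[OF norm_Helmholtz_kernel_le]) (simp_all add: D_def)
    show "cmod (Gfun \<Omega> \<epsilon>0 \<mu>0 \<alpha> Je Jm x y \<omega> $ i) \<le> Cg * sqrt (P y)"
      unfolding Cg_def P_def by (rule norm_Gfun_nth_le_H1_density[where \<alpha> = \<alpha> and M = M, OF assms(1,3-5) x assms(9,10)])
  qed (use D assms(4,5) M K in \<open>auto simp: E_def Cg_def\<close>)
  also have "\<dots> = field_constant \<Omega> \<epsilon>0 \<mu>0 M * (1 + K)\<^sup>2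
       * exp (2 * D * s * T) * (H1_norm_sq \<Omega> Je + H1_norm_sq \<Omega> Jm)"
  proof -
    have "(exp (s * T * D))\<^sup>2 = exp (2 * D * s * T)"
      by (simp add: power2_eq_square algebra_simps flip: exp_add)
    then show ?thesis
      by (simp add: P_int(2) E_def Cg_def field_constant_def D_def power_mult_distrib power_divide)
  qed
  finally show ?thesis by (simp add: D_def s_def)
qed

lemma norm_boundary_integrand_le:
  fixes Je Jm :: "real^3 \<Rightarrow> real^3"
  assumes "open \<Omega>" and "bounded \<Omega>" and "C2_boundary \<Omega>" and "0 < \<epsilon>0" and "0 < \<mu>0"
    and "in_H1 \<Omega> Je" and "in_H1 \<Omega> Jm"
    and "0 \<le> M" and "AE x in surface_measure. x \<in> frontier \<Omega> \<longrightarrow> cmod (\<alpha> x) \<le> M"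
    and "cmod \<omega> \<le> K" and "\<bar>Im \<omega>\<bar> \<le> T"
  shows "cmod (LINT x:frontier \<Omega>|surface_measure.
      cdot (boundary_field \<Omega> \<epsilon>0 \<mu>0 \<alpha> Je Jm x \<omega>) (boundary_field \<Omega> \<epsilon>0 \<mu>0 \<alpha> Je Jm x (- \<omega>)))
    \<le> 3 * measure surface_measure (frontier \<Omega>) * field_constant \<Omega> \<epsilon>0 \<mu>0 M * (1 + K)\<^sup>2
       * exp (2 * diameter \<Omega> * sqrt (\<epsilon>0 * \<mu>0) * T) * (H1_norm_sq \<Omega> Je + H1_norm_sq \<Omega> Jm)"
proof -
  define X where "X = field_constant \<Omega> \<epsilon>0 \<mu>0 M * (1 + K)\<^sup>2
       * exp (2 * diameter \<Omega> * sqrt (\<epsilon>0 * \<mu>0) * T) * (H1_norm_sq \<Omega> Je + H1_norm_sq \<Omega> Jm)"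
  have "0 \<le> X"
    using field_constant_nonneg[OF assms(8,2)] H1_norm_sq_nonneg[OF assms(6)] H1_norm_sq_nonneg[OF assms(7)]
    by (simp add: X_def)
  have field: "(cmod (boundary_field \<Omega> \<epsilon>0 \<mu>0 \<alpha> Je Jm x \<omega>' $ i))\<^sup>2 \<le> X"
    if "x \<in> frontier \<Omega>" "cmod (\<alpha> x) \<le> M" "\<omega>' \<in> {\<omega>, - \<omega>}" for x \<omega>' i
    using norm_boundary_field_nth_sq_le[OF assms(1-7) that(1), of \<alpha> M \<omega>' K T i] that(2,3) assms(10,11)
    by (auto simp: X_def)
  have "AE x in surface_measure. x \<in> frontier \<Omega> \<longrightarrow>
      cmod (cdot (boundary_field \<Omega> \<epsilon>0 \<mu>0 \<alpha> Je Jm x \<omega>) (boundary_field \<Omega> \<epsilon>0 \<mu>0 \<alpha> Je Jm x (- \<omega>)))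
      \<le> 3 * X"
    using assms(9)
  proof eventually_elim
    case (elim x)
    show ?case
    proof
      assume "x \<in> frontier \<Omega>"
      with elim have "cmod (\<alpha> x) \<le> M" by blast
      with \<open>x \<in> frontier \<Omega>\<close> show "cmod (cdot (boundary_field \<Omega> \<epsilon>0 \<mu>0 \<alpha> Je Jm x \<omega>)
          (boundary_field \<Omega> \<epsilon>0 \<mu>0 \<alpha> Je Jm x (- \<omega>))) \<le> 3 * X"
        by (intro norm_cdot_le_sq field) simp_all
    qed
  qed
  then have "cmod (LINT x:frontier \<Omega>|surface_measure.
      cdot (boundary_field \<Omega> \<epsilon>0 \<mu>0 \<alpha> Je Jm x \<omega>) (boundary_field \<Omega> \<epsilon>0 \<mu>0 \<alpha> Je Jm x (- \<omega>)))
    \<le> 3 * X * measure surface_measure (frontier \<Omega>)"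
    using \<open>0 \<le> X\<close> emeasure_frontier_finite[OF assms(1-3)]
    by (intro norm_set_integral_le_measure[OF frontier_in_sets_surface_measure]) auto
  then show ?thesis by (simp add: X_def mult_ac)
qed

lemma closed_segment_0_le:
  assumes "\<omega> \<in> closed_segment 0 k"
  shows "cmod \<omega> \<le> cmod k" and "\<bar>Im \<omega>\<bar> \<le> \<bar>Im k\<bar>"
proof -
  obtain u where "0 \<le> u" "u \<le> 1" "\<omega> = u *\<^sub>R k" using assms unfolding closed_segment_def by auto
  then show "cmod \<omega> \<le> cmod k" and "\<bar>Im \<omega>\<bar> \<le> \<bar>Im k\<bar>"
    by (simp_all add: abs_mult mult_left_le_one_le)
qed

lemma norm_contour_integral_linepath_le:
  assumes "0 \<le> B" and "\<And>\<omega>. \<omega> \<in> closed_segment a b \<Longrightarrow> norm (f \<omega>) \<le> B"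
  shows "norm (contour_integral (linepath a b) f) \<le> B * norm (b - a)"
proof (cases "f contour_integrable_on linepath a b")
  case True
  then show ?thesis using contour_integral_bound_linepath[OF True assms] by simp
next
  case False
  then show ?thesis using assms(1) by (simp add: not_integrable_contour_integral)
qed

lemma mult_one_plus_square_le_cube:
  fixes t :: real
  assumes "0 \<le> t"
  shows "t * (1 + t)\<^sup>2 \<le> 4 * (1 + t ^ 3)"
proof -
  have expand: "t * (1 + t)\<^sup>2 = t + 2 * t\<^sup>2 + t ^ 3"
    by (simp add: power2_eq_square power3_eq_cube algebra_simps)
  have "t + 2 * t\<^sup>2 \<le> 3 + 3 * t ^ 3"
  proof (cases "t \<le> 1")
    case True
    then have "t\<^sup>2 \<le> 1" and "0 \<le> t ^ 3" using assms by (simp_all add: power_le_one)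
    then show ?thesis using True by linarith
  next
    case False
    then have "t \<le> t ^ 3" "t\<^sup>2 \<le> t ^ 3" by (simp_all add: power_increasing[of 1 3 t, simplified] power_increasing)
    then show ?thesis by linarith
  qed
  then show ?thesis unfolding expand by (simp add: algebra_simps)
qed

lemma norm_I0_le:
  fixes Je Jm :: "real^3 \<Rightarrow> real^3"
  assumes "open \<Omega>" and "bounded \<Omega>" and "C2_boundary \<Omega>" and "0 < \<epsilon>0" and "0 < \<mu>0"
    and "in_H1 \<Omega> Je" and "in_H1 \<Omega> Jm"
    and "0 \<le> M" and "AE x in surface_measure. x \<in> frontier \<Omega> \<longrightarrow> cmod (\<alpha> x) \<le> M"
  shows "cmod (I0 \<Omega> \<epsilon>0 \<mu>0 \<alpha> Je Jm k)
    \<le> 6 * measure surface_measure (frontier \<Omega>) * field_constant \<Omega> \<epsilon>0 \<mu>0 M * (cmod k * (1 + cmod k)\<^sup>2)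
       * exp (2 * diameter \<Omega> * sqrt (\<epsilon>0 * \<mu>0) * \<bar>Im k\<bar>) * (H1_norm_sq \<Omega> Je + H1_norm_sq \<Omega> Jm)"
proof -
  define B where "B = 3 * measure surface_measure (frontier \<Omega>) * field_constant \<Omega> \<epsilon>0 \<mu>0 M
    * (1 + cmod k)\<^sup>2 * exp (2 * diameter \<Omega> * sqrt (\<epsilon>0 * \<mu>0) * \<bar>Im k\<bar>)
    * (H1_norm_sq \<Omega> Je + H1_norm_sq \<Omega> Jm)"
  have "0 \<le> B"
    using field_constant_nonneg[OF assms(8,2)] H1_norm_sq_nonneg[OF assms(6)] H1_norm_sq_nonneg[OF assms(7)]
    by (simp add: B_def)
  have "cmod (contour_integral (linepath 0 k) (\<lambda>\<omega>. LINT x:frontier \<Omega>|surface_measure.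
      cdot (boundary_field \<Omega> \<epsilon>0 \<mu>0 \<alpha> Je Jm x \<omega>) (boundary_field \<Omega> \<epsilon>0 \<mu>0 \<alpha> Je Jm x (- \<omega>))))
    \<le> B * cmod (k - 0)"
    unfolding B_def
    by (intro norm_contour_integral_linepath_le \<open>0 \<le> B\<close>[unfolded B_def]
        norm_boundary_integrand_le[OF assms closed_segment_0_le])
  then show ?thesis by (simp add: I0_eq_boundary_field norm_mult B_def mult_ac)
qed

theorem lemma3p1:
  fixes \<Omega> :: "(real^3) set" and \<epsilon>0 \<mu>0 :: real and \<alpha> :: "real^3 \<Rightarrow> complex"
  assumes "open \<Omega>" and "connected \<Omega>" and "bounded \<Omega>" and "\<Omega> \<noteq> {}"
    and "C2_boundary \<Omega>"
    and "\<epsilon>0 > 0" and "\<mu>0 > 0"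
    and "Linfty_boundary \<Omega> \<alpha>"
  shows "\<exists>C. \<forall>Je Jm k.
           in_H1 \<Omega> Je \<and> in_H1 \<Omega> Jm \<and> supp_in \<Omega> Je \<and> supp_in \<Omega> Jm \<longrightarrow>
           cmod (I0 \<Omega> \<epsilon>0 \<mu>0 \<alpha> Je Jm k)
             \<le> C * (1 + cmod k ^ 3) * (H1_norm_sq \<Omega> Je + H1_norm_sq \<Omega> Jm)
                 * exp (2 * diameter \<Omega> * sqrt (\<epsilon>0 * \<mu>0) * \<bar>Im k\<bar>)"
proof -
  obtain M0 where "AE x in surface_measure. x \<in> frontier \<Omega> \<longrightarrow> cmod (\<alpha> x) \<le> M0"
    using assms(8) unfolding Linfty_boundary_def by blast
  then have M: "AE x in surface_measure. x \<in> frontier \<Omega> \<longrightarrow> cmod (\<alpha> x) \<le> max 0 M0"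
    by eventually_elim auto
  define c where "c = 6 * measure surface_measure (frontier \<Omega>) * field_constant \<Omega> \<epsilon>0 \<mu>0 (max 0 M0)"
  have c: "0 \<le> c" using field_constant_nonneg[OF _ assms(3)] by (simp add: c_def)
  show ?thesis
  proof (intro exI[of _ "4 * c"] allI impI)
    fix Je Jm :: "real^3 \<Rightarrow> real^3" and k :: complex
    assume J: "in_H1 \<Omega> Je \<and> in_H1 \<Omega> Jm \<and> supp_in \<Omega> Je \<and> supp_in \<Omega> Jm"
    define N where "N = H1_norm_sq \<Omega> Je + H1_norm_sq \<Omega> Jm"
    define e where "e = exp (2 * diameter \<Omega> * sqrt (\<epsilon>0 * \<mu>0) * \<bar>Im k\<bar>)"
    have N: "0 \<le> N" using J H1_norm_sq_nonneg by (simp add: N_def)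
    have "cmod (I0 \<Omega> \<epsilon>0 \<mu>0 \<alpha> Je Jm k) \<le> c * (cmod k * (1 + cmod k)\<^sup>2) * e * N"
      using norm_I0_le[OF assms(1,3,5-7) _ _ max.cobounded1 M] J by (simp add: c_def e_def N_def)
    also have "\<dots> \<le> c * (4 * (1 + cmod k ^ 3)) * e * N"
      using mult_one_plus_square_le_cube[of "cmod k"] c N
      by (intro mult_right_mono mult_left_mono) (simp_all add: e_def)
    finally show "cmod (I0 \<Omega> \<epsilon>0 \<mu>0 \<alpha> Je Jm k) \<le> 4 * c * (1 + cmod k ^ 3) * N * e"
      by (simp only: mult_ac)
  qed
qed

end
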